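(* In the random-intercept setting of the context (with any $K\ge1$), let $q^*_{FF}=\arg\max_{q}V(q\Vert\pi)$ over the fully factorized family $\{q:q(\theta)=\prod_{k=0}^Kq(\theta_k)\}$. Then $$UQF(q^*_{FF}\Vert\pi)\le1-\max_{1\le k\le K}\Big(\frac{n\bar{D}}{G_kT_k+n\bar{D}}\Big)^{1/2},\qquad \bar{D}=\frac1n\sum_{i=1}^nD_{ii}^2.$$
   Context: Random-intercept setting: integers $n,K\ge1$, $G_1,\dots,G_K\ge1$; each observation $i=1,\dots,n$ belongs to exactly one level of each factor $k$, encoded by a one-hot vector $m_{i,k}\in\{0,1\}^{G_k}$. Parameters $\theta=(\theta_0,\theta_1,\dots,\theta_K)$ with $\theta_0\in\mathbb{R}$, $\theta_k\in\mathbb{R}^{G_k}$, and $\eta_i(\theta)=\theta_0+\sum_{k=1}^Km_{i,k}^T\theta_k$. Given constants $D_{ii}>0$ ($i=1,\dots,n$), $T_k>0$ ($k=1,\dots,K$) and $\nu\in\mathbb{R}^n$, the target is the Gaussian distribution $\pi(\theta)\propto\exp\{-\frac12\sum_{i=1}^n(\nu_i-D_{ii}\eta_i(\theta))^2-\frac12\sum_{k=1}^KT_k\|\theta_k\|^2\}$. (In the paper this is the intermediate target $\pi(\theta)\propto\exp\{\mathbb{E}_{q(\phi)}\log p(\theta,\phi,y)\}$ of a Gaussian or Polya-Gamma-augmented binomial random-intercept mixed model with flat prior on $\theta_0$ and fixed $q(\phi)$, with $D_{ii}^2=\mathbb{E}[1/\sigma^2]$ and $T_k=\mathbb{E}[1/\sigma^2]\mathbb{E}[1/\Sigma_k]$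 in the Gaussian case, $D_{ii}^2=\mathbb{E}[\omega_i]$ and $T_k=\mathbb{E}[1/\Sigma_k]$ in the binomial case.) $V(q\Vert\pi)=\mathbb{E}_q[\log\pi(\theta)-\log q(\theta)]$. $UQF(q\Vert\pi)=\inf_{v\ne0}\mathrm{var}_q(\theta^Tv)/\mathrm{var}_\pi(\theta^Tv)$. *)

theory Defs
  imports "HOL-Analysis.Analysis"
begin

text \<open>Parameter vector theta is represented as a function on the finite index set
  idx K G = {(0,0)} \<union> {(k,g). 1 \<le> k \<le> K, g < G k}; coordinate (0,0) is theta_0 and
  (k,g) is the g-th entry of theta_k. The level of observation i in factor k is lev i k
  (the one-hot vector m_{i,k} has its 1 in position lev i k).\<close>

definition blk :: "(nat \<Rightarrow> nat) \<Rightarrow> nat \<Rightarrow> (nat \<times> nat) set" where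
  "blk G k = (if k = 0 then {(0,0)} else {(k,g) | g. g < G k})"

definition idx :: "nat \<Rightarrow> (nat \<Rightarrow> nat) \<Rightarrow> (nat \<times> nat) set" where
  "idx K G = (\<Union>k\<in>{0..K}. blk G k)"

definition PM :: "(nat \<times> nat) set \<Rightarrow> (nat \<times> nat \<Rightarrow> real) measure" where
  "PM I = PiM I (\<lambda>_. lborel)"

definition eta :: "nat \<Rightarrow> (nat \<Rightarrow> nat \<Rightarrow> nat) \<Rightarrow> nat \<Rightarrow> (nat \<times> nat \<Rightarrow> real) \<Rightarrow> real" where
  "eta K lev i th = th (0,0) + (\<Sum>k=1..K. th (k, lev i k))"

definition log_target_u ::
  "nat \<Rightarrow> nat \<Rightarrow> (nat \<Rightarrow> nat) \<Rightarrow> (nat \<Rightarrow> nat \<Rightarrow> nat) \<Rightarrow> (nat \<Rightarrow> real) \<Rightarrow> (nat \<Rightarrow> real)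
    \<Rightarrow> (nat \<Rightarrow> real) \<Rightarrow> (nat \<times> nat \<Rightarrow> real) \<Rightarrow> real" where
  "log_target_u n K G lev D T nu th =
     - (1/2) * (\<Sum>i<n. (nu i - D i * eta K lev i th)^2)
     - (1/2) * (\<Sum>k=1..K. T k * (\<Sum>g<G k. (th (k,g))^2))"

definition target_dens ::
  "nat \<Rightarrow> nat \<Rightarrow> (nat \<Rightarrow> nat) \<Rightarrow> (nat \<Rightarrow> nat \<Rightarrow> nat) \<Rightarrow> (nat \<Rightarrow> real) \<Rightarrow> (nat \<Rightarrow> real)
    \<Rightarrow> (nat \<Rightarrow> real) \<Rightarrow> (nat \<times> nat \<Rightarrow> real) \<Rightarrow> real" where
  "target_dens n K G lev D T nu th =
     exp (log_target_u n K G lev D T nu th) /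
     (\<integral>th'. exp (log_target_u n K G lev D T nu th') \<partial>PM (idx K G))"

definition is_density :: "'a measure \<Rightarrow> ('a \<Rightarrow> real) \<Rightarrow> bool" where
  "is_density M f \<longleftrightarrow> f \<in> borel_measurable M \<and> (\<forall>x\<in>space M. 0 \<le> f x)
     \<and> integrable M f \<and> (\<integral>x. f x \<partial>M) = 1"

text \<open>V(q || p) = E_q[log p - log q]  (note ln 0 = 0, so q ln q = 0 where q = 0).\<close>
definition Vobj :: "'a measure \<Rightarrow> ('a \<Rightarrow> real) \<Rightarrow> ('a \<Rightarrow> real) \<Rightarrow> real" where
  "Vobj M q p = (\<integral>x. q x * (ln (p x) - ln (q x)) \<partial>M)"

text \<open>Fully factorised family: densities q(theta) = prod_{k=0..K} q_k(theta_k), restricted to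
  those q for which V(q || p) is well defined (both integrals finite).\<close>
definition FF_family :: "nat \<Rightarrow> (nat \<Rightarrow> nat) \<Rightarrow> ((nat \<times> nat \<Rightarrow> real) \<Rightarrow> real)
    \<Rightarrow> ((nat \<times> nat \<Rightarrow> real) \<Rightarrow> real) set" where
  "FF_family K G p = {q. is_density (PM (idx K G)) q
     \<and> integrable (PM (idx K G)) (\<lambda>x. q x * ln (q x))
     \<and> integrable (PM (idx K G)) (\<lambda>x. q x * ln (p x))
     \<and> (\<exists>f. (\<forall>k\<in>{0..K}. f k \<in> borel_measurable (PM (blk G k))
                         \<and> (\<forall>y\<in>space (PM (blk G k)). 0 \<le> f k y))
           \<and> (\<forall>x\<in>space (PM (idx K G)). q x = (\<Prod>k\<in>{0..K}. f k (restrict x (blk G k)))))}"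

definition lin :: "(nat \<times> nat) set \<Rightarrow> (nat \<times> nat \<Rightarrow> real) \<Rightarrow> (nat \<times> nat \<Rightarrow> real) \<Rightarrow> real" where
  "lin I v th = (\<Sum>j\<in>I. v j * th j)"

definition var_dens :: "'a measure \<Rightarrow> ('a \<Rightarrow> real) \<Rightarrow> ('a \<Rightarrow> real) \<Rightarrow> real" where
  "var_dens M f h = (\<integral>x. f x * (h x)^2 \<partial>M) - (\<integral>x. f x * h x \<partial>M)^2"

definition UQF :: "nat \<Rightarrow> (nat \<Rightarrow> nat) \<Rightarrow> ((nat \<times> nat \<Rightarrow> real) \<Rightarrow> real)
    \<Rightarrow> ((nat \<times> nat \<Rightarrow> real) \<Rightarrow> real) \<Rightarrow> real" where
  "UQF K G q p = (INF v \<in> {v. \<exists>j\<in>idx K G. v j \<noteq> 0}.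
      var_dens (PM (idx K G)) q (lin (idx K G) v) / var_dens (PM (idx K G)) p (lin (idx K G) v))"

end

theory Submission
  imports Defs "HOL-Probability.Distributions"
begin

text \<open>The target p \<propto> exp L is Gaussian with precision matrix Q = D^T D + diag T. Pushing a
  density r forward along a shear x \<mapsto> x + s h(x) e_j with h affine changes V(r \<parallel> p) by
  s E_r[h \<partial>_j L] - s^2/2 Q_jj E_r[h^2] + ln \<bar>1 + s \<partial>_j h\<bar>, so at a maximiser the derivative
  at s = 0 vanishes, which is the Stein identity E_r[h \<partial>_j L] = - \<partial>_j h. For p itself, the
  maximiser of V over all densities, this gives Q Cov_p = 1. Shears inside a single block preserve
  full factorisation, so for the optimal q the identity holds within each block; since the blocks
  are independent under q and Q is diagonal inside a random-effect block, Cov_q = diag (1 / Q_jj).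
  Finally the UQF is tested on v = e_0 - (\<Sum>_g s_kg e_kg) / (S \<rho>_k), where s_kg is the weight of
  level g of factor k and S = \<Sum>_i D_ii^2: var_q(v^T\<theta>) is explicit, var_p(v^T\<theta>) \<ge>
  (v^T w)^2 / (w^T Q w) by Cauchy-Schwarz for the Q-inner product, and a suitable w gives the ratio
  1 - \<rho>_k; a second Cauchy-Schwarz gives \<rho>_k^2 \<ge> S / (G_k T_k + S).\<close>

lemma blk_zero [simp]: "blk G 0 = {(0,0)}"
  by (simp add: blk_def)

lemma mem_blk: "l \<in> blk G k \<longleftrightarrow> (k = 0 \<and> l = (0,0)) \<or> (k \<noteq> 0 \<and> fst l = k \<and> snd l < G k)"
  by (cases l) (auto simp: blk_def)

lemma mem_idx: "l \<in> idx K G \<longleftrightarrow> l = (0,0) \<or> (fst l \<in> {1..K} \<and> snd l < G (fst l))"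
  by (cases l) (auto simp: idx_def mem_blk)

lemma mem_idx_blk: "l \<in> idx K G \<Longrightarrow> \<exists>k\<in>{0..K}. l \<in> blk G k"
  by (simp add: idx_def)

lemma finite_blk [simp]: "finite (blk G k)"
proof -
  have "blk G k \<subseteq> {0..k} \<times> {0..G k}" by (auto simp: mem_blk)
  then show ?thesis by (rule finite_subset) auto
qed

lemma finite_idx [simp]: "finite (idx K G)"
  by (simp add: idx_def)

lemma zero_mem_idx [simp]: "(0,0) \<in> idx K G"
  by (simp add: mem_idx)

lemma blk_subset_idx: "k \<in> {0..K} \<Longrightarrow> blk G k \<subseteq> idx K G"
  by (auto simp: idx_def)

lemma blk_disjoint: "k \<noteq> k' \<Longrightarrow> blk G k \<inter> blk G k' = {}"
  by (auto simp: mem_blk)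

lemma sum_blk: "k \<noteq> 0 \<Longrightarrow> (\<Sum>l\<in>blk G k. f l) = (\<Sum>g<G k. f (k,g))"
proof -
  assume k: "k \<noteq> 0"
  have "blk G k = (\<lambda>g. (k,g)) ` {..<G k}" using k by (auto simp: blk_def)
  then show ?thesis by (simp add: sum.reindex inj_on_def)
qed

lemma sum_idx: "(\<Sum>l\<in>idx K G. f l) = f (0,0) + (\<Sum>k=1..K. \<Sum>g<G k. f (k,g))"
proof -
  have "{0..K} = insert 0 {1..K}" by auto
  then have blocks: "idx K G = {(0,0)} \<union> (\<Union>k\<in>{1..K}. blk G k)"
    by (simp add: idx_def)
  have "(0,0) \<notin> (\<Union>k\<in>{1..K}. blk G k)" by (auto simp: mem_blk)
  then have "(\<Sum>l\<in>idx K G. f l) = f (0,0) + (\<Sum>l\<in>(\<Union>k\<in>{1..K}. blk G k). f l)"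
    unfolding blocks by (subst sum.union_disjoint) auto
  also have "(\<Sum>l\<in>(\<Union>k\<in>{1..K}. blk G k). f l) = (\<Sum>k=1..K. \<Sum>l\<in>blk G k. f l)"
    by (rule sum.UNION_disjoint) (auto simp: mem_blk)
  also have "\<dots> = (\<Sum>k=1..K. \<Sum>g<G k. f (k,g))"
    by (rule sum.cong) (auto simp: sum_blk)
  finally show ?thesis .
qed

lemma sum_idx_single_block:
  assumes k: "k \<in> {1..K}" and f: "\<And>l. l \<noteq> (0,0) \<Longrightarrow> fst l \<noteq> k \<Longrightarrow> f l = 0"
  shows "(\<Sum>l\<in>idx K G. f l) = f (0,0) + (\<Sum>g<G k. f (k,g))"
proof -
  have "(\<Sum>k'=1..K. \<Sum>g<G k'. f (k',g)) = (\<Sum>k'=1..K. (if k' = k then (\<Sum>g<G k. f (k,g)) else 0))"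
    by (intro sum.cong refl) (use f in auto)
  also have "\<dots> = (\<Sum>g<G k. f (k,g))" using k by (simp add: sum.delta)
  finally show ?thesis by (simp add: sum_idx)
qed

section \<open>Shears of coordinate space\<close>

definition shear :: "(nat \<times> nat) set \<Rightarrow> nat \<times> nat \<Rightarrow> real \<Rightarrow> real \<Rightarrow> (nat \<times> nat \<Rightarrow> real)
    \<Rightarrow> (nat \<times> nat \<Rightarrow> real) \<Rightarrow> (nat \<times> nat \<Rightarrow> real)" where
  "shear U j \<alpha> a c x = x(j := \<alpha> * x j + a + (\<Sum>l\<in>U-{j}. c l * x l))"

definition shear_inv :: "(nat \<times> nat) set \<Rightarrow> nat \<times> nat \<Rightarrow> real \<Rightarrow> real \<Rightarrow> (nat \<times> nat \<Rightarrow> real)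
    \<Rightarrow> (nat \<times> nat \<Rightarrow> real) \<Rightarrow> (nat \<times> nat \<Rightarrow> real)" where
  "shear_inv U j \<alpha> a c = shear U j (1/\<alpha>) (-a/\<alpha>) (\<lambda>l. - c l / \<alpha>)"

lemma shear_update: "shear U j \<alpha> a c (x(j := y)) = x(j := \<alpha> * y + a + (\<Sum>l\<in>U-{j}. c l * x l))"
proof -
  have "(\<Sum>l\<in>U-{j}. c l * (x(j := y)) l) = (\<Sum>l\<in>U-{j}. c l * x l)"
    by (intro sum.cong) auto
  then show ?thesis by (simp add: shear_def)
qed

lemma shear_inv_shear: assumes "\<alpha> \<noteq> 0"
  shows "shear_inv U j \<alpha> a c (shear U j \<alpha> a c x) = x"
proof -
  have s: "(\<Sum>l\<in>U-{j}. - c l / \<alpha> * x l) = - (\<Sum>l\<in>U-{j}. c l * x l) / \<alpha>"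
    by (simp add: sum_divide_distrib sum_negf[symmetric])
  show ?thesis unfolding shear_inv_def shear_def[of U j \<alpha>] shear_update[of U j "1/\<alpha>"] s using assms
    by (simp add: field_simps)
qed

lemma restrict_shear_in: assumes "j \<in> U"
  shows "restrict (shear U j \<alpha> a c x) U = shear U j \<alpha> a c (restrict x U)"
proof -
  have "(\<Sum>l\<in>U-{j}. c l * restrict x U l) = (\<Sum>l\<in>U-{j}. c l * x l)" by (intro sum.cong) auto
  then show ?thesis using assms by (auto simp: shear_def fun_eq_iff restrict_def)
qed

lemma restrict_shear_out: assumes "j \<notin> V"
  shows "restrict (shear U j \<alpha> a c x) V = restrict x V"
  using assms by (auto simp: shear_def fun_eq_iff restrict_def)

lemma measurable_coord: "l \<in> J \<Longrightarrow> (\<lambda>x. x l) \<in> borel_measurable (PiM J (\<lambda>_. lborel))"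
  using measurable_component_singleton[of l J "\<lambda>_. lborel"] by simp

lemma measurable_shear:
  assumes J: "j \<in> J" "U \<subseteq> J"
  shows "shear U j \<alpha> a c \<in> measurable (PM J) (PM J)"
  unfolding PM_def
proof -
  have "(\<lambda>x. \<lambda>i. (shear U j \<alpha> a c x) i) \<in> measurable (PiM J (\<lambda>_. lborel)) (PiM J (\<lambda>_. lborel))"
  proof (rule measurable_PiM_single')
    fix i assume i: "i \<in> J"
    show "(\<lambda>x. shear U j \<alpha> a c x i) \<in> measurable (PiM J (\<lambda>_. lborel)) lborel"
    proof (cases "i = j")
      case True
      have "(\<lambda>x. \<alpha> * x j + a + (\<Sum>l\<in>U-{j}. c l * x l)) \<in> borel_measurable (PiM J (\<lambda>_. lborel))"
        using J by (intro borel_measurable_add borel_measurable_sum borel_measurable_times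
             borel_measurable_const measurable_coord) auto
      then show ?thesis using True by (simp add: shear_def)
    next
      case False
      then show ?thesis using i by (simp add: shear_def)
    qed
  next
    show "(\<lambda>x i. shear U j \<alpha> a c x i) \<in> space (PiM J (\<lambda>_. lborel)) \<rightarrow> (\<Pi>\<^sub>E i\<in>J. space lborel)"
      using J by (auto simp: space_PiM shear_def PiE_def extensional_def)
  qed
  then show "shear U j \<alpha> a c \<in> measurable (PiM J (\<lambda>_. lborel)) (PiM J (\<lambda>_. lborel))" by simp
qed

lemma nn_integral_shear:
  assumes J: "finite J" "j \<in> J" "U \<subseteq> J" and \<alpha>: "\<alpha> \<noteq> 0"
    and g: "g \<in> borel_measurable (PM J)"
  shows "(\<integral>\<^sup>+x. g (shear U j \<alpha> a c x) \<partial>PM J) = ennreal (1/\<bar>\<alpha>\<bar>) * (\<integral>\<^sup>+x. g x \<partial>PM J)"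
proof -
  interpret product_sigma_finite "\<lambda>_. lborel" by standard
  define J' where "J' = J - {j}"
  have JJ: "J = insert j J'" and jJ': "j \<notin> J'" and fJ': "finite J'" using J by (auto simp: J'_def)
  have gm: "g \<in> borel_measurable (PiM (insert j J') (\<lambda>_. lborel))" using g JJ by (simp add: PM_def)
  have gT: "(\<lambda>x. g (shear U j \<alpha> a c x)) \<in> borel_measurable (PiM (insert j J') (\<lambda>_. lborel))"
    using measurable_comp[OF measurable_shear[OF J(2,3)] g] JJ by (simp add: PM_def comp_def)
  have gc: "(\<lambda>x. ennreal (1/\<bar>\<alpha>\<bar>) * g x) \<in> borel_measurable (PiM (insert j J') (\<lambda>_. lborel))"
    using gm by simp
  have inner: "(\<integral>\<^sup>+y. g (shear U j \<alpha> a c (x(j := y))) \<partial>lborel) = (\<integral>\<^sup>+y. ennreal (1/\<bar>\<alpha>\<bar>) * g (x(j := y)) \<partial>lborel)"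
    if x: "x \<in> space (PiM J' (\<lambda>_. lborel))" for x
  proof -
    define f where "f = (\<lambda>y. g (x(j := y)))"
    have fm: "f \<in> borel_measurable borel"
      using measurable_comp[OF measurable_component_update[OF x jJ'] gm] by (simp add: f_def comp_def)
    define t where "t = a + (\<Sum>l\<in>U-{j}. c l * x l)"
    have "(\<integral>\<^sup>+y. g (shear U j \<alpha> a c (x(j := y))) \<partial>lborel) = (\<integral>\<^sup>+y. f (t + \<alpha> * y) \<partial>lborel)"
      by (simp add: shear_update f_def t_def algebra_simps)
    also have "\<dots> = ennreal (1/\<bar>\<alpha>\<bar>) * (ennreal \<bar>\<alpha>\<bar> * (\<integral>\<^sup>+y. f (t + \<alpha> * y) \<partial>lborel))"
      using \<alpha> by (simp add: mult.assoc[symmetric] ennreal_mult[symmetric])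
    also have "ennreal \<bar>\<alpha>\<bar> * (\<integral>\<^sup>+y. f (t + \<alpha> * y) \<partial>lborel) = (\<integral>\<^sup>+y. f y \<partial>lborel)"
      using nn_integral_real_affine[OF fm \<alpha>, of t] by simp
    also have "ennreal (1/\<bar>\<alpha>\<bar>) * (\<integral>\<^sup>+y. f y \<partial>lborel) = (\<integral>\<^sup>+y. ennreal (1/\<bar>\<alpha>\<bar>) * f y \<partial>lborel)"
      using fm by (simp add: nn_integral_cmult)
    finally show ?thesis unfolding f_def .
  qed
  have "(\<integral>\<^sup>+x. g (shear U j \<alpha> a c x) \<partial>PM J) = (\<integral>\<^sup>+x. g (shear U j \<alpha> a c x) \<partial>PiM (insert j J') (\<lambda>_. lborel))"
    using JJ by (simp add: PM_def)
  also have "\<dots> = (\<integral>\<^sup>+x. (\<integral>\<^sup>+y. g (shear U j \<alpha> a c (x(j := y))) \<partial>lborel) \<partial>PiM J' (\<lambda>_. lborel))"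
    by (rule product_nn_integral_insert[OF fJ' jJ' gT])
  also have "\<dots> = (\<integral>\<^sup>+x. (\<integral>\<^sup>+y. ennreal (1/\<bar>\<alpha>\<bar>) * g (x(j := y)) \<partial>lborel) \<partial>PiM J' (\<lambda>_. lborel))"
    by (rule nn_integral_cong) (simp add: inner)
  also have "\<dots> = (\<integral>\<^sup>+x. ennreal (1/\<bar>\<alpha>\<bar>) * g x \<partial>PiM (insert j J') (\<lambda>_. lborel))"
    by (rule product_nn_integral_insert[OF fJ' jJ' gc, symmetric])
  also have "\<dots> = ennreal (1/\<bar>\<alpha>\<bar>) * (\<integral>\<^sup>+x. g x \<partial>PiM (insert j J') (\<lambda>_. lborel))"
    using gm by (simp add: nn_integral_cmult)
  finally show ?thesis using JJ by (simp add: PM_def)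
qed

lemma distr_shear:
  assumes J: "finite J" "j \<in> J" "U \<subseteq> J" and \<alpha>: "\<alpha> \<noteq> 0"
  shows "distr (PM J) (PM J) (shear U j \<alpha> a c) = density (PM J) (\<lambda>_. ennreal (1/\<bar>\<alpha>\<bar>))"
proof (rule measure_eqI)
  show "sets (distr (PM J) (PM J) (shear U j \<alpha> a c)) = sets (density (PM J) (\<lambda>_. ennreal (1/\<bar>\<alpha>\<bar>)))"
    by simp
  fix A assume A: "A \<in> sets (distr (PM J) (PM J) (shear U j \<alpha> a c))"
  then have A': "A \<in> sets (PM J)" by simp
  have "emeasure (distr (PM J) (PM J) (shear U j \<alpha> a c)) A = (\<integral>\<^sup>+x. indicator A x \<partial>distr (PM J) (PM J) (shear U j \<alpha> a c))"
    using A by simp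
  also have "\<dots> = (\<integral>\<^sup>+x. indicator A (shear U j \<alpha> a c x) \<partial>PM J)"
    using A' by (intro nn_integral_distr measurable_shear J) auto
  also have "\<dots> = ennreal (1/\<bar>\<alpha>\<bar>) * (\<integral>\<^sup>+x. indicator A x \<partial>PM J)"
    using A' by (intro nn_integral_shear J \<alpha>) auto
  also have "\<dots> = (\<integral>\<^sup>+x. ennreal (1/\<bar>\<alpha>\<bar>) * indicator A x \<partial>PM J)"
    using A' by (simp add: nn_integral_cmult)
  also have "\<dots> = emeasure (density (PM J) (\<lambda>_. ennreal (1/\<bar>\<alpha>\<bar>))) A"
    using A' by (simp add: emeasure_density)
  finally show "emeasure (distr (PM J) (PM J) (shear U j \<alpha> a c)) A = emeasure (density (PM J) (\<lambda>_. ennreal (1/\<bar>\<alpha>\<bar>))) A" .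
qed

lemma integral_shear:
  fixes f :: "(nat \<times> nat \<Rightarrow> real) \<Rightarrow> real"
  assumes J: "finite J" "j \<in> J" "U \<subseteq> J" and \<alpha>: "\<alpha> \<noteq> 0"
    and f: "f \<in> borel_measurable (PM J)"
  shows "integral\<^sup>L (PM J) (\<lambda>x. f (shear U j \<alpha> a c x)) = (1/\<bar>\<alpha>\<bar>) * integral\<^sup>L (PM J) f"
    and "integrable (PM J) (\<lambda>x. f (shear U j \<alpha> a c x)) \<longleftrightarrow> integrable (PM J) f"
proof -
  have T: "shear U j \<alpha> a c \<in> measurable (PM J) (PM J)" by (rule measurable_shear[OF J(2,3)])
  have "integral\<^sup>L (PM J) (\<lambda>x. f (shear U j \<alpha> a c x)) = integral\<^sup>L (distr (PM J) (PM J) (shear U j \<alpha> a c)) f"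
    by (rule integral_distr[OF T f, symmetric])
  also have "\<dots> = integral\<^sup>L (density (PM J) (\<lambda>_. ennreal (1/\<bar>\<alpha>\<bar>))) f"
    by (simp add: distr_shear[OF J \<alpha>])
  also have "\<dots> = integral\<^sup>L (PM J) (\<lambda>x. (1/\<bar>\<alpha>\<bar>) *\<^sub>R f x)"
    by (rule integral_density) (auto simp: f)
  also have "\<dots> = (1/\<bar>\<alpha>\<bar>) * integral\<^sup>L (PM J) f" by simp
  finally show "integral\<^sup>L (PM J) (\<lambda>x. f (shear U j \<alpha> a c x)) = (1/\<bar>\<alpha>\<bar>) * integral\<^sup>L (PM J) f" .
  have "integrable (PM J) (\<lambda>x. f (shear U j \<alpha> a c x)) \<longleftrightarrow> integrable (distr (PM J) (PM J) (shear U j \<alpha> a c)) f"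
    by (rule integrable_distr_eq[OF T f, symmetric])
  also have "\<dots> \<longleftrightarrow> integrable (density (PM J) (\<lambda>_. ennreal (1/\<bar>\<alpha>\<bar>))) f"
    by (simp add: distr_shear[OF J \<alpha>])
  also have "\<dots> \<longleftrightarrow> integrable (PM J) (\<lambda>x. (1/\<bar>\<alpha>\<bar>) *\<^sub>R f x)"
    by (rule integrable_density) (auto simp: f)
  also have "\<dots> \<longleftrightarrow> integrable (PM J) f" using \<alpha> integrable_mult_left_iff[of "PM J" "1/\<bar>\<alpha>\<bar>" f] by simp
  finally show "integrable (PM J) (\<lambda>x. f (shear U j \<alpha> a c x)) \<longleftrightarrow> integrable (PM J) f" .
qed

lemma measurable_shear_inv: "j \<in> J \<Longrightarrow> U \<subseteq> J \<Longrightarrow> shear_inv U j \<alpha> a c \<in> measurable (PM J) (PM J)"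
  unfolding shear_inv_def by (rule measurable_shear)

definition shear_pushforward :: "((nat \<times> nat \<Rightarrow> real) \<Rightarrow> real) \<Rightarrow> (nat \<times> nat) set \<Rightarrow> nat \<times> nat
    \<Rightarrow> real \<Rightarrow> real \<Rightarrow> (nat \<times> nat \<Rightarrow> real) \<Rightarrow> (nat \<times> nat \<Rightarrow> real) \<Rightarrow> real" where
  "shear_pushforward r U j \<alpha> a c x = r (shear_inv U j \<alpha> a c x) / \<bar>\<alpha>\<bar>"

lemma borel_measurable_shear_pushforward:
  assumes "j \<in> J" "U \<subseteq> J" "r \<in> borel_measurable (PM J)"
  shows "shear_pushforward r U j \<alpha> a c \<in> borel_measurable (PM J)"
  using measurable_comp[OF measurable_shear_inv[OF assms(1,2)] assms(3)]
  by (simp add: shear_pushforward_def[abs_def] comp_def)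

lemma integral_shear_pushforward:
  fixes r F :: "(nat \<times> nat \<Rightarrow> real) \<Rightarrow> real" and a :: real and c :: "nat \<times> nat \<Rightarrow> real"
  assumes J: "finite J" "j \<in> J" "U \<subseteq> J" and \<alpha>: "\<alpha> \<noteq> 0"
    and r: "r \<in> borel_measurable (PM J)" and F: "F \<in> borel_measurable (PM J)"
  shows "(\<integral>x. shear_pushforward r U j \<alpha> a c x * F x \<partial>PM J) = (\<integral>x. r x * F (shear U j \<alpha> a c x) \<partial>PM J)"
    and "integrable (PM J) (\<lambda>x. shear_pushforward r U j \<alpha> a c x * F x)
      \<longleftrightarrow> integrable (PM J) (\<lambda>x. r x * F (shear U j \<alpha> a c x))"
proof -
  let ?f = "\<lambda>x. shear_pushforward r U j \<alpha> a c x * F x"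
  have fm: "?f \<in> borel_measurable (PM J)"
    using borel_measurable_shear_pushforward[OF J(2,3) r] F by simp
  have e: "?f (shear U j \<alpha> a c x) = (1/\<bar>\<alpha>\<bar>) * (r x * F (shear U j \<alpha> a c x))" for x
    using \<alpha> by (simp add: shear_pushforward_def shear_inv_shear)
  have nz: "1/\<bar>\<alpha>\<bar> \<noteq> (0::real)" using \<alpha> by simp
  have "(1/\<bar>\<alpha>\<bar>) * integral\<^sup>L (PM J) (\<lambda>x. r x * F (shear U j \<alpha> a c x)) = (1/\<bar>\<alpha>\<bar>) * integral\<^sup>L (PM J) ?f"
    using integral_shear(1)[OF J \<alpha> fm, where a=a and c=c] by (simp only: e integral_mult_right_zero)
  then show "integral\<^sup>L (PM J) ?f = integral\<^sup>L (PM J) (\<lambda>x. r x * F (shear U j \<alpha> a c x))"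
    by (simp only: mult_left_cancel[OF nz])
  have "integrable (PM J) (\<lambda>x. ?f (shear U j \<alpha> a c x)) \<longleftrightarrow> integrable (PM J) (\<lambda>x. r x * F (shear U j \<alpha> a c x))"
    unfolding e using nz by (simp only: integrable_mult_left_iff) simp
  then show "integrable (PM J) ?f \<longleftrightarrow> integrable (PM J) (\<lambda>x. r x * F (shear U j \<alpha> a c x))"
    using integral_shear(2)[OF J \<alpha> fm, where a=a and c=c] by simp
qed

lemma is_density_shear_pushforward:
  fixes a :: real and c :: "nat \<times> nat \<Rightarrow> real"
  assumes J: "finite J" "j \<in> J" "U \<subseteq> J" and \<alpha>: "\<alpha> \<noteq> 0" and r: "is_density (PM J) r"
  shows "is_density (PM J) (shear_pushforward r U j \<alpha> a c)"
proof -
  have rm: "r \<in> borel_measurable (PM J)" using r by (simp add: is_density_def)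
  note CoV = integral_shear_pushforward[OF J \<alpha> rm, where F = "\<lambda>_. 1" and a=a and c=c, simplified]
  have "shear_pushforward r U j \<alpha> a c x \<ge> 0" if "x \<in> space (PM J)" for x
    using r measurable_space[OF measurable_shear_inv[OF J(2,3)] that]
    by (simp add: shear_pushforward_def is_density_def)
  then show ?thesis
    using r CoV borel_measurable_shear_pushforward[OF J(2,3) rm] by (simp add: is_density_def)
qed

lemma entropy_shear_pushforward:
  fixes a :: real and c :: "nat \<times> nat \<Rightarrow> real"
  assumes J: "finite J" "j \<in> J" "U \<subseteq> J" and \<alpha>: "\<alpha> \<noteq> 0" and r: "is_density (PM J) r"
    and rl: "integrable (PM J) (\<lambda>x. r x * ln (r x))"
  defines "rs \<equiv> shear_pushforward r U j \<alpha> a c"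
  shows "integrable (PM J) (\<lambda>x. rs x * ln (rs x))"
    and "(\<integral>x. rs x * ln (rs x) \<partial>PM J) = (\<integral>x. r x * ln (r x) \<partial>PM J) - ln \<bar>\<alpha>\<bar>"
proof -
  have rm: "r \<in> borel_measurable (PM J)" and ri: "integrable (PM J) r"
    and r1: "integral\<^sup>L (PM J) r = 1" using r by (auto simp: is_density_def)
  have rsm: "rs \<in> borel_measurable (PM J)"
    unfolding rs_def by (rule borel_measurable_shear_pushforward[OF J(2,3) rm])
  have lnrs: "(\<lambda>x. ln (rs x)) \<in> borel_measurable (PM J)" using rsm by measurable
  note CoV = integral_shear_pushforward[OF J \<alpha> rm lnrs, where a=a and c=c, folded rs_def]
  have pt: "r x * ln (rs (shear U j \<alpha> a c x)) = r x * ln (r x) - ln \<bar>\<alpha>\<bar> * r x"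
    if "x \<in> space (PM J)" for x
  proof (cases "r x = 0")
    case False
    then have "r x > 0" using r that by (auto simp: is_density_def less_le)
    then show ?thesis using \<alpha> by (simp add: rs_def shear_pushforward_def shear_inv_shear ln_div algebra_simps)
  qed simp
  have "integrable (PM J) (\<lambda>x. r x * ln (rs (shear U j \<alpha> a c x)))
      \<longleftrightarrow> integrable (PM J) (\<lambda>x. r x * ln (r x) - ln \<bar>\<alpha>\<bar> * r x)"
    by (rule Bochner_Integration.integrable_cong) (auto simp: pt)
  then show "integrable (PM J) (\<lambda>x. rs x * ln (rs x))" using CoV(2) rl ri by simp
  have "(\<integral>x. rs x * ln (rs x) \<partial>PM J) = (\<integral>x. r x * ln (r x) - ln \<bar>\<alpha>\<bar> * r x \<partial>PM J)"
    unfolding CoV(1) by (rule Bochner_Integration.integral_cong) (auto simp: pt)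
  also have "\<dots> = (\<integral>x. r x * ln (r x) \<partial>PM J) - ln \<bar>\<alpha>\<bar>" using rl ri r1 by simp
  finally show "(\<integral>x. rs x * ln (rs x) \<partial>PM J) = (\<integral>x. r x * ln (r x) \<partial>PM J) - ln \<bar>\<alpha>\<bar>" .
qed

text \<open>When c vanishes outside U, this is the density of the image of r under
  x \<mapsto> x(j := x j + s * (a + (\<Sum>l. c l * x l))), cf. shear_eq_update below.\<close>

abbreviation perturb :: "((nat \<times> nat \<Rightarrow> real) \<Rightarrow> real) \<Rightarrow> (nat \<times> nat) set \<Rightarrow> nat \<times> nat \<Rightarrow> real
    \<Rightarrow> (nat \<times> nat \<Rightarrow> real) \<Rightarrow> real \<Rightarrow> (nat \<times> nat \<Rightarrow> real) \<Rightarrow> real" where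
  "perturb r U j a c s \<equiv> shear_pushforward r U j (1 + s * c j) (s * a) (\<lambda>l. s * c l)"

lemma integrable_exp_neg_sq: assumes mu: "(\<mu>::real) > 0"
  shows "integrable lborel (\<lambda>t. exp (- \<mu> * t^2))"
proof -
  define \<sigma> where "\<sigma> = sqrt (1/(2*\<mu>))"
  have sp: "\<sigma> > 0" using mu by (simp add: \<sigma>_def)
  have s2: "\<sigma>^2 = 1/(2*\<mu>)" using mu by (simp add: \<sigma>_def)
  have e: "exp (- \<mu> * t^2) = sqrt (2 * pi * \<sigma>^2) * normal_density 0 \<sigma> t" for t
  proof -
    have "sqrt (2 * pi * \<sigma>^2) > 0" using sp by simp
    moreover have "-(t - 0)\<^sup>2 / (2 * \<sigma>\<^sup>2) = - \<mu> * t^2" using mu by (simp add: s2 field_simps)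
    ultimately show ?thesis using sp by (simp add: normal_density_def)
  qed
  show ?thesis unfolding e using integrable_normal_density[of \<sigma> 0] sp by simp
qed

lemma integrable_exp_neg_sum_sq:
  assumes J: "finite J" and mu: "\<mu> > 0"
  shows "integrable (PM J) (\<lambda>x. exp (- \<mu> * (\<Sum>l\<in>J. (x l)^2)))"
proof -
  interpret product_sigma_finite "\<lambda>_. lborel" by standard
  have i1: "integrable lborel (\<lambda>t. exp (- \<mu> * t^2))" by (rule integrable_exp_neg_sq[OF mu])
  then have fin1: "(\<integral>\<^sup>+t. ennreal (exp (- \<mu> * t^2)) \<partial>lborel) < \<infinity>"
    unfolding integrable_iff_bounded by simp
  have m: "(\<lambda>x. exp (- \<mu> * (\<Sum>l\<in>J. (x l)^2))) \<in> borel_measurable (PM J)"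
  proof -
    have "(\<lambda>x. (\<Sum>l\<in>J. (x l)^2)) \<in> borel_measurable (PM J)"
      unfolding PM_def by (intro borel_measurable_sum borel_measurable_power measurable_coord) auto
    then show ?thesis by measurable
  qed
  have "(\<integral>\<^sup>+x. ennreal (norm (exp (- \<mu> * (\<Sum>l\<in>J. (x l)^2)))) \<partial>PM J)
      = (\<integral>\<^sup>+x. (\<Prod>l\<in>J. ennreal (exp (- \<mu> * (x l)^2))) \<partial>PM J)"
  proof (rule nn_integral_cong)
    fix x
    have "exp (- \<mu> * (\<Sum>l\<in>J. (x l)^2)) = (\<Prod>l\<in>J. exp (- \<mu> * (x l)^2))"
      using J by (simp add: sum_distrib_left exp_sum sum_negf[symmetric])
    then show "ennreal (norm (exp (- \<mu> * (\<Sum>l\<in>J. (x l)^2)))) = (\<Prod>l\<in>J. ennreal (exp (- \<mu> * (x l)^2)))"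
      by (simp add: prod_ennreal abs_of_nonneg prod_nonneg)
  qed
  also have "\<dots> = (\<Prod>l\<in>J. (\<integral>\<^sup>+t. ennreal (exp (- \<mu> * t^2)) \<partial>lborel))"
    unfolding PM_def by (rule product_nn_integral_prod[OF J]) simp
  also have "\<dots> < \<infinity>" using fin1 by (simp add: power_less_top_ennreal)
  finally show ?thesis using m unfolding integrable_iff_bounded by simp
qed

lemma square_diff_lower_bound: "(a - b)^2 \<ge> b^2/2 - (a::real)^2"
proof -
  have "0 \<le> (2*a - b)^2" by simp
  then show ?thesis by (simp add: power2_eq_square algebra_simps)
qed

lemma square_sum_lower_bound: "(a + b)^2 \<ge> a^2/2 - (b::real)^2"
proof -
  have "0 \<le> (a + 2*b)^2" by simp
  then show ?thesis by (simp add: power2_eq_square algebra_simps)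
qed

lemma integrable_dominated:
  fixes f g :: "'a \<Rightarrow> real"
  assumes "integrable N f" "g \<in> borel_measurable N" "\<And>x. x \<in> space N \<Longrightarrow> \<bar>g x\<bar> \<le> f x"
  shows "integrable N g"
proof (rule Bochner_Integration.integrable_bound[OF assms(1,2)])
  show "AE x in N. norm (g x) \<le> norm (f x)"
    using assms(3) by (intro AE_I2) (auto intro: order.trans[OF _ abs_ge_self])
qed

lemma mult_exp_neg_le:
  assumes lam: "(lam::real) > 0" and S: "S \<ge> 0"
  shows "S * exp (- lam * S) \<le> 2 / lam * exp (- (lam/2) * S)"
proof -
  have "lam * S / 2 \<le> exp (lam * S / 2)" using exp_ge_add_one_self[of "lam * S / 2"] by linarith
  then have "S \<le> 2 / lam * exp (lam * S / 2)" using lam by (simp add: field_simps)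
  then have "S * exp (- lam * S) \<le> 2 / lam * exp (lam * S / 2) * exp (- lam * S)"
    by (intro mult_right_mono) auto
  also have "\<dots> = 2 / lam * exp (- (lam/2) * S)"
    by (simp add: mult.assoc exp_add[symmetric])
  finally show ?thesis .
qed

lemma ln_one_plus_lower_bound: fixes y :: real assumes "\<bar>y\<bar> \<le> 1/2" shows "y - 2 * y^2 \<le> ln (1 + y)"
proof (cases "y \<ge> 0")
  case True
  then have "y - y^2 \<le> ln (1 + y)" using assms by (intro ln_one_plus_pos_lower_bound) auto
  moreover have "y^2 \<ge> 0" by simp
  ultimately show ?thesis by linarith
next
  case False
  then have "- (-y) - 2 * (-y)^2 \<le> ln (1 - (-y))" using assms by (intro ln_one_minus_pos_lower_bound) auto
  then show ?thesis by simp
qed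

lemma eq_of_perturbation_nonpos:
  fixes A B c :: real
  assumes H: "\<And>s. 1 + s * c \<noteq> 0 \<Longrightarrow> s * A - s^2 / 2 * B + ln \<bar>1 + s * c\<bar> \<le> 0"
  shows "A = - c"
proof (rule ccontr)
  assume ne: "A \<noteq> - c"
  define e where "e = A + c"
  have e0: "e \<noteq> 0" using ne by (simp add: e_def)
  define K0 where "K0 = \<bar>B\<bar>/2 + 2 * c^2 + \<bar>e * c\<bar> + 1"
  have K0p: "K0 \<ge> 1" by (simp add: K0_def)
  define \<delta> where "\<delta> = 1 / (2 * K0)"
  have dp: "\<delta> > 0" using K0p by (simp add: \<delta>_def)
  define s where "s = e * \<delta>"
  have sc: "\<bar>s * c\<bar> \<le> 1/2"
  proof -
    have "\<bar>s * c\<bar> = \<delta> * \<bar>e * c\<bar>" using dp by (simp add: s_def abs_mult)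
    also have "\<dots> \<le> \<delta> * K0" using dp by (intro mult_left_mono) (auto simp: K0_def)
    also have "\<dots> = 1/2" using K0p by (simp add: \<delta>_def)
    finally show ?thesis .
  qed
  have pos: "1 + s * c > 0" using sc by (auto simp: abs_le_iff)
  have "s * A - s^2 / 2 * B + ln \<bar>1 + s * c\<bar> \<le> 0" by (rule H) (use pos in simp)
  moreover have "ln \<bar>1 + s * c\<bar> \<ge> s * c - 2 * (s * c)^2" using ln_one_plus_lower_bound[OF sc] pos by simp
  moreover have "s^2 / 2 * B \<le> s^2 * (\<bar>B\<bar>/2)" by (auto intro: mult_left_mono simp: abs_ge_self)
  ultimately have "s * e - s^2 * (\<bar>B\<bar>/2 + 2 * c^2) \<le> 0"
    by (simp add: e_def algebra_simps power_mult_distrib)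
  moreover have "s * e - s^2 * (\<bar>B\<bar>/2 + 2 * c^2) > 0"
  proof -
    have eq: "s^2 * (\<bar>B\<bar>/2 + 2 * c^2) = e^2 * (\<delta> * (\<delta> * (\<bar>B\<bar>/2 + 2 * c^2)))"
      by (simp add: s_def power2_eq_square algebra_simps)
    have a0: "\<delta> * (\<bar>B\<bar>/2 + 2 * c^2) \<le> \<delta> * K0" using dp by (intro mult_left_mono) (auto simp: K0_def)
    have a1: "\<delta> * (\<bar>B\<bar>/2 + 2 * c^2) \<le> 1/2" using a0 K0p by (simp add: \<delta>_def)
    have a2: "\<delta> * (\<delta> * (\<bar>B\<bar>/2 + 2 * c^2)) \<le> \<delta> * (1/2)"
      by (intro mult_left_mono a1) (use dp in simp)
    have a3: "e^2 * (\<delta> * (\<delta> * (\<bar>B\<bar>/2 + 2 * c^2))) \<le> e^2 * (\<delta> * (1/2))"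
      by (intro mult_left_mono a2) simp
    have "s^2 * (\<bar>B\<bar>/2 + 2 * c^2) \<le> e^2 * (\<delta> * (1/2))" unfolding eq by (rule a3)
    then have "s^2 * (\<bar>B\<bar>/2 + 2 * c^2) \<le> e^2 * \<delta> / 2" by simp
    moreover have "s * e = e^2 * \<delta>" by (simp add: s_def power2_eq_square)
    moreover have "e^2 * \<delta> > 0" using e0 dp by simp
    ultimately show ?thesis by linarith
  qed
  ultimately show False by linarith
qed

lemma sum_quad_rank_one:
  fixes a :: "nat \<Rightarrow> real" and b :: "nat \<Rightarrow> 'i \<Rightarrow> real"
  shows "(\<Sum>i\<in>A. \<Sum>j\<in>A. (\<Sum>t\<in>N. a t * b t i * b t j) * w j * w i) = (\<Sum>t\<in>N. a t * (\<Sum>i\<in>A. b t i * w i)^2)"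
proof -
  have "(\<Sum>t\<in>N. a t * (\<Sum>i\<in>A. b t i * w i)^2) = (\<Sum>t\<in>N. \<Sum>i\<in>A. \<Sum>j\<in>A. a t * b t i * b t j * w j * w i)"
  proof (intro sum.cong refl)
    fix t
    have "(\<Sum>i\<in>A. b t i * w i)^2 = (\<Sum>i\<in>A. \<Sum>j\<in>A. b t i * w i * (b t j * w j))"
      by (simp add: power2_eq_square sum_product)
    then show "a t * (\<Sum>i\<in>A. b t i * w i)^2 = (\<Sum>i\<in>A. \<Sum>j\<in>A. a t * b t i * b t j * w j * w i)"
      by (simp add: sum_distrib_left mult.commute mult.left_commute)
  qed
  also have "\<dots> = (\<Sum>i\<in>A. \<Sum>t\<in>N. \<Sum>j\<in>A. a t * b t i * b t j * w j * w i)" by (rule sum.swap)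
  also have "\<dots> = (\<Sum>i\<in>A. \<Sum>j\<in>A. \<Sum>t\<in>N. a t * b t i * b t j * w j * w i)"
    by (intro sum.cong refl) (rule sum.swap)
  also have "\<dots> = (\<Sum>i\<in>A. \<Sum>j\<in>A. (\<Sum>t\<in>N. a t * b t i * b t j) * w j * w i)"
    by (simp add: sum_distrib_right)
  finally show ?thesis by simp
qed

lemma bilinear_shift_expand:
  "(\<Sum>i\<in>A. \<Sum>l\<in>A. (v i + t * y i) * (v l + t * y l) * C i l)
   = (\<Sum>i\<in>A. \<Sum>l\<in>A. v i * v l * C i l) + t * (\<Sum>i\<in>A. \<Sum>l\<in>A. v i * y l * C i l)
     + t * (\<Sum>i\<in>A. \<Sum>l\<in>A. y i * v l * C i l) + t^2 * (\<Sum>i\<in>A. \<Sum>l\<in>A. y i * y l * (C i l :: real))"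
proof -
  have "(v i + t * y i) * (v l + t * y l) * C i l = v i * v l * C i l + t * (v i * y l * C i l)
     + t * (y i * v l * C i l) + t^2 * (y i * y l * C i l)" for i l
    by (simp add: power2_eq_square algebra_simps)
  then show ?thesis by (simp add: sum.distrib sum_distrib_left)
qed

lemma quad_term_identity:
  fixes s X S r :: real
  assumes "X > 0" "S > 0" "r > 0"
  shows "s * (1 / S + - s / (S * r * X))^2 + (X - s) * (- s / (S * r * X))^2
    = s / S^2 - 2 / (S^2 * r) * (s^2 / X) + 1 / (S^2 * r^2) * (s^2 / X)"
  using assms by (simp add: power2_eq_square field_simps)

lemma integral_PM_merge_product:
  fixes q f H \<phi> \<psi> :: "(nat \<times> nat \<Rightarrow> real) \<Rightarrow> real"
  assumes BR: "B \<inter> R = {}" "finite B" "finite R"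
    and q: "\<And>y z. y \<in> space (PM B) \<Longrightarrow> z \<in> space (PM R) \<Longrightarrow> q (merge B R (y, z)) = f y * H z"
    and int: "integrable (PM (B \<union> R)) (\<lambda>x. q x * (\<phi> (restrict x B) * \<psi> (restrict x R)))"
  shows "(\<integral>x. q x * (\<phi> (restrict x B) * \<psi> (restrict x R)) \<partial>PM (B \<union> R))
    = (\<integral>y. f y * \<phi> y \<partial>PM B) * (\<integral>z. H z * \<psi> z \<partial>PM R)"
proof -
  interpret product_sigma_finite "\<lambda>_. lborel" by standard
  have "(\<integral>x. q x * (\<phi> (restrict x B) * \<psi> (restrict x R)) \<partial>PM (B \<union> R))
     = (\<integral>y. (\<integral>z. q (merge B R (y, z)) * (\<phi> (restrict (merge B R (y, z)) B) * \<psi> (restrict (merge B R (y, z)) R))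
          \<partial>PiM R (\<lambda>_. lborel)) \<partial>PiM B (\<lambda>_. lborel))"
    using product_integral_fold[OF BR int[unfolded PM_def]] by (simp add: PM_def)
  also have "\<dots> = (\<integral>y. (\<integral>z. (f y * \<phi> y) * (H z * \<psi> z) \<partial>PiM R (\<lambda>_. lborel)) \<partial>PiM B (\<lambda>_. lborel))"
  proof (intro Bochner_Integration.integral_cong refl)
    fix y z :: "nat \<times> nat \<Rightarrow> real"
    assume y: "y \<in> space (PiM B (\<lambda>_. lborel))" and z: "z \<in> space (PiM R (\<lambda>_. lborel))"
    have "restrict y B = y" "restrict z R = z"
      using y z by (simp_all add: space_PiM PiE_def extensional_restrict)
    then show "q (merge B R (y, z)) * (\<phi> (restrict (merge B R (y, z)) B) * \<psi> (restrict (merge B R (y, z)) R))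
      = (f y * \<phi> y) * (H z * \<psi> z)"
      using q[of y z] y z BR by (simp add: PM_def)
  qed
  also have "\<dots> = (\<integral>y. f y * \<phi> y \<partial>PM B) * (\<integral>z. H z * \<psi> z \<partial>PM R)"
    by (simp add: PM_def)
  finally show ?thesis .
qed

section \<open>The Gaussian target\<close>

locale random_intercept =
  fixes n K :: nat and G :: "nat \<Rightarrow> nat" and lev :: "nat \<Rightarrow> nat \<Rightarrow> nat"
    and D T nu :: "nat \<Rightarrow> real"
  assumes n_pos: "n \<ge> 1" and K_pos: "K \<ge> 1"
    and lev_less: "\<And>i k. i < n \<Longrightarrow> k \<in> {1..K} \<Longrightarrow> lev i k < G k"
    and D_pos: "\<And>i. i < n \<Longrightarrow> D i > 0"
    and T_pos: "\<And>k. k \<in> {1..K} \<Longrightarrow> T k > 0"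
begin

abbreviation "I \<equiv> idx K G"
abbreviation "M \<equiv> PM I"
abbreviation "L \<equiv> log_target_u n K G lev D T nu"

definition design :: "nat \<Rightarrow> nat \<times> nat \<Rightarrow> real" where
  "design i l = (if l = (0,0) then 1 else if fst l \<in> {1..K} \<and> snd l = lev i (fst l) then 1 else 0)"

definition prior_prec :: "nat \<times> nat \<Rightarrow> real" where
  "prior_prec l = (if l = (0,0) then 0 else T (fst l))"

lemma design_idem: "design i l * design i l = design i l" by (simp add: design_def)

lemma eta_eq_sum: "i < n \<Longrightarrow> eta K lev i x = (\<Sum>l\<in>I. design i l * x l)"
proof -
  assume i: "i < n"
  have "(\<Sum>l\<in>I. design i l * x l) = x (0,0) + (\<Sum>k=1..K. \<Sum>g<G k. design i (k,g) * x (k,g))"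
    by (simp add: sum_idx design_def)
  also have "(\<Sum>k=1..K. \<Sum>g<G k. design i (k,g) * x (k,g)) = (\<Sum>k=1..K. x (k, lev i k))"
  proof (rule sum.cong)
    fix k assume k: "k \<in> {1..K}"
    have "(\<Sum>g<G k. design i (k,g) * x (k,g)) = (\<Sum>g<G k. (if g = lev i k then x (k,g) else 0))"
      using k by (intro sum.cong) (auto simp: design_def)
    also have "\<dots> = x (k, lev i k)" using lev_less[OF i k] by (simp add: sum.delta)
    finally show "(\<Sum>g<G k. design i (k,g) * x (k,g)) = x (k, lev i k)" .
  qed simp
  finally show ?thesis by (simp add: eta_def)
qed

lemma prior_sum_eq: "(\<Sum>k=1..K. T k * (\<Sum>g<G k. (x (k,g))^2)) = (\<Sum>l\<in>I. prior_prec l * (x l)^2)"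
proof -
  have "(\<Sum>l\<in>I. prior_prec l * (x l)^2) = prior_prec (0,0) * (x (0,0))^2 + (\<Sum>k=1..K. \<Sum>g<G k. prior_prec (k,g) * (x (k,g))^2)"
    by (rule sum_idx)
  also have "\<dots> = (\<Sum>k=1..K. T k * (\<Sum>g<G k. (x (k,g))^2))"
    by (simp add: prior_prec_def sum_distrib_left)
  finally show ?thesis by (rule sym)
qed

lemma log_target_eq: "L x = - (1/2) * (\<Sum>i<n. (nu i - D i * (\<Sum>l\<in>I. design i l * x l))^2)
     - (1/2) * (\<Sum>l\<in>I. prior_prec l * (x l)^2)"
proof -
  have "(\<Sum>i<n. (nu i - D i * eta K lev i x)^2) = (\<Sum>i<n. (nu i - D i * (\<Sum>l\<in>I. design i l * x l))^2)"
    by (intro sum.cong) (auto simp: eta_eq_sum)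
  then show ?thesis unfolding log_target_u_def prior_sum_eq by simp
qed

definition dlog :: "nat \<times> nat \<Rightarrow> (nat \<times> nat \<Rightarrow> real) \<Rightarrow> real" where
  "dlog j x = (\<Sum>i<n. D i * design i j * (nu i - D i * (\<Sum>l\<in>I. design i l * x l))) - prior_prec j * x j"

definition prec_diag :: "nat \<times> nat \<Rightarrow> real" where
  "prec_diag j = (\<Sum>i<n. (D i)^2 * design i j) + prior_prec j"

lemma sum_update: fixes x :: "nat \<times> nat \<Rightarrow> real" shows "j \<in> I \<Longrightarrow> (\<Sum>l\<in>I. c l * (x(j := x j + t)) l) = (\<Sum>l\<in>I. c l * x l) + c j * t"
proof -
  assume j: "j \<in> I"
  have "(\<Sum>l\<in>I. c l * (x(j := x j + t)) l) = (\<Sum>l\<in>I. c l * x l + (if l = j then c j * t else 0))"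
  proof (intro sum.cong refl)
    fix l show "c l * (x(j := x j + t)) l = c l * x l + (if l = j then c j * t else 0)"
      by (cases "l = j") (simp_all add: distrib_left)
  qed
  also have "\<dots> = (\<Sum>l\<in>I. c l * x l) + c j * t" using j by (simp add: sum.distrib)
  finally show ?thesis .
qed

lemma log_target_update: assumes j: "j \<in> I"
  shows "L (x(j := x j + t)) = L x + t * dlog j x - t^2 / 2 * prec_diag j"
proof -
  have e: "(\<Sum>l\<in>I. design i l * (x(j := x j + t)) l) = (\<Sum>l\<in>I. design i l * x l) + design i j * t" for i
    using sum_update[OF j] .
  have sq: "(\<Sum>l\<in>I. prior_prec l * ((x(j := x j + t)) l)^2) = (\<Sum>l\<in>I. prior_prec l * (x l)^2) + prior_prec j * (2 * x j * t + t^2)"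
  proof -
    have "(\<Sum>l\<in>I. prior_prec l * ((x(j := x j + t)) l)^2) = (\<Sum>l\<in>I. prior_prec l * (x l)^2 + (if l = j then prior_prec j * (2 * x j * t + t^2) else 0))"
      by (intro sum.cong) (auto simp: power2_eq_square algebra_simps)
    then show ?thesis using j by (simp add: sum.distrib)
  qed
  have t1: "(\<Sum>i<n. (nu i - D i * ((\<Sum>l\<in>I. design i l * x l) + design i j * t))^2)
     = (\<Sum>i<n. (nu i - D i * (\<Sum>l\<in>I. design i l * x l))^2) - 2 * t * (\<Sum>i<n. D i * design i j * (nu i - D i * (\<Sum>l\<in>I. design i l * x l)))
       + t^2 * (\<Sum>i<n. (D i)^2 * design i j)"
  proof -
    have "(nu i - D i * ((\<Sum>l\<in>I. design i l * x l) + design i j * t))^2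
      = (nu i - D i * (\<Sum>l\<in>I. design i l * x l))^2 - 2 * t * (D i * design i j * (nu i - D i * (\<Sum>l\<in>I. design i l * x l)))
       + t^2 * ((D i)^2 * design i j)" for i
    proof -
      have "(design i j)^2 = design i j" using design_idem[of i j] by (simp add: power2_eq_square)
      then show ?thesis by (simp add: power2_eq_square algebra_simps)
    qed
    then show ?thesis by (simp add: sum.distrib sum_subtractf sum_distrib_left)
  qed
  show ?thesis
    unfolding log_target_eq e sq t1 dlog_def prec_diag_def by (simp add: algebra_simps power2_eq_square)
qed

definition prec :: "nat \<times> nat \<Rightarrow> nat \<times> nat \<Rightarrow> real" where
  "prec j l = (\<Sum>i<n. (D i)^2 * design i j * design i l) + (if j = l then prior_prec j else 0)"

definition beta :: "nat \<times> nat \<Rightarrow> real" where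
  "beta j = (\<Sum>i<n. D i * nu i * design i j)"

lemma prec_sym: "prec j l = prec l j" by (simp add: prec_def mult.commute mult.left_commute)

lemma prec_diag_eq: "prec j j = prec_diag j" by (simp add: prec_def prec_diag_def design_idem mult.assoc)

lemma dlog_eq: assumes j: "j \<in> I" shows "dlog j x = beta j - (\<Sum>l\<in>I. prec j l * x l)"
proof -
  have a: "(\<Sum>l\<in>I. prec j l * x l) = (\<Sum>i<n. (D i)^2 * design i j * (\<Sum>l\<in>I. design i l * x l)) + prior_prec j * x j"
  proof -
    have "(\<Sum>l\<in>I. prec j l * x l) = (\<Sum>l\<in>I. (\<Sum>i<n. (D i)^2 * design i j * (design i l * x l)) + (if l = j then prior_prec j * x j else 0))"
      by (intro sum.cong) (auto simp: prec_def sum_distrib_right sum_distrib_left algebra_simps)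
    also have "\<dots> = (\<Sum>i<n. (D i)^2 * design i j * (\<Sum>l\<in>I. design i l * x l)) + prior_prec j * x j"
      using j by (simp add: sum.distrib sum.swap[of _ I] sum_distrib_left)
    finally show ?thesis .
  qed
  show ?thesis unfolding a dlog_def beta_def
    by (simp add: algebra_simps power2_eq_square sum_subtractf sum.distrib sum_distrib_left)
qed

lemma prec_off_diag_blk: assumes j: "j \<in> blk G k" and l: "l \<in> blk G k" and ne: "j \<noteq> l"
  shows "prec j l = 0"
proof (cases "k = 0")
  case True then show ?thesis using j l ne by simp
next
  case False
  obtain g g' where jg: "j = (k,g)" and lg: "l = (k,g')"
    using j l False by (cases j, cases l) (auto simp: mem_blk)
  have gg: "g \<noteq> g'" using ne jg lg by auto
  have h0: "design t j * design t l = 0" for t using False gg by (auto simp: design_def jg lg)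
  have "(\<Sum>t<n. (D t)^2 * design t j * design t l) = 0" by (simp only: mult.assoc h0) simp
  then show ?thesis using ne by (simp add: prec_def)
qed

lemma prec_diag_pos: assumes j: "j \<in> I" shows "prec_diag j > 0"
proof (cases "j = (0,0)")
  case True
  have "(\<Sum>i<n. (D i)^2 * design i j) = (\<Sum>i<n. (D i)^2)" using True by (simp add: design_def)
  also have "\<dots> > 0"
  proof (intro sum_pos)
    show "{..<n} \<noteq> {}" using n_pos by (auto simp: lessThan_empty_iff)
    fix i assume "i \<in> {..<n}" then show "0 < (D i)^2" using D_pos[of i] by simp
  qed simp
  finally show ?thesis using True by (simp add: prec_diag_def prior_prec_def)
next
  case False
  then have k: "fst j \<in> {1..K}" using j by (simp add: mem_idx)
  have "(\<Sum>i<n. (D i)^2 * design i j) \<ge> 0" by (intro sum_nonneg) (simp add: design_def)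
  moreover have "prior_prec j > 0" using False T_pos[OF k] by (simp add: prior_prec_def)
  ultimately show ?thesis by (simp add: prec_diag_def)
qed

lemma prec_quad_eq: "(\<Sum>i\<in>I. \<Sum>j\<in>I. prec i j * w j * w i)
   = (\<Sum>t<n. (D t)^2 * (eta K lev t w)^2) + (\<Sum>i\<in>I. prior_prec i * (w i)^2)"
proof -
  have "(\<Sum>i\<in>I. \<Sum>j\<in>I. prec i j * w j * w i)
     = (\<Sum>i\<in>I. \<Sum>j\<in>I. (\<Sum>t<n. (D t)^2 * design t i * design t j) * w j * w i)
       + (\<Sum>i\<in>I. \<Sum>j\<in>I. (if i = j then prior_prec i * w j * w i else 0))"
  proof -
    have "prec i j * w j * w i = (\<Sum>t<n. (D t)^2 * design t i * design t j) * w j * w i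
        + (if i = j then prior_prec i * w j * w i else 0)" for i j
      by (simp add: prec_def distrib_right)
    then show ?thesis by (simp add: sum.distrib)
  qed
  also have "(\<Sum>i\<in>I. \<Sum>j\<in>I. (if i = j then prior_prec i * w j * w i else 0)) = (\<Sum>i\<in>I. prior_prec i * (w i)^2)"
    by (simp add: sum.delta power2_eq_square mult.assoc)
  also have "(\<Sum>i\<in>I. \<Sum>j\<in>I. (\<Sum>t<n. (D t)^2 * design t i * design t j) * w j * w i)
      = (\<Sum>t<n. (D t)^2 * (\<Sum>i\<in>I. design t i * w i)^2)"
    by (rule sum_quad_rank_one)
  also have "\<dots> = (\<Sum>t<n. (D t)^2 * (eta K lev t w)^2)"
    by (intro sum.cong refl) (simp add: eta_eq_sum)
  finally show ?thesis .
qed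

definition lev_weight :: "nat \<Rightarrow> nat \<Rightarrow> real" where
  "lev_weight k g = (\<Sum>t<n. (if lev t k = g then (D t)^2 else 0))"

definition Dsq_sum :: real where "Dsq_sum = (\<Sum>t<n. (D t)^2)"

lemma lev_weight_nonneg: "lev_weight k g \<ge> 0" unfolding lev_weight_def by (intro sum_nonneg) auto

lemma sum_by_level: assumes k: "k \<in> {1..K}"
  shows "(\<Sum>t<n. (D t)^2 * f (lev t k)) = (\<Sum>g<G k. lev_weight k g * f g)"
proof -
  have "(\<Sum>g<G k. lev_weight k g * f g) = (\<Sum>g<G k. \<Sum>t<n. (if lev t k = g then (D t)^2 else 0) * f g)"
    by (simp add: lev_weight_def sum_distrib_right)
  also have "\<dots> = (\<Sum>g<G k. \<Sum>t<n. (if g = lev t k then (D t)^2 * f g else 0))"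
    by (intro sum.cong refl) auto
  also have "\<dots> = (\<Sum>t<n. \<Sum>g<G k. (if g = lev t k then (D t)^2 * f g else 0))" by (rule sum.swap)
  also have "\<dots> = (\<Sum>t<n. (D t)^2 * f (lev t k))"
    by (intro sum.cong refl) (use lev_less k in \<open>simp add: sum.delta'\<close>)
  finally show ?thesis by simp
qed

lemma sum_lev_weight: "k \<in> {1..K} \<Longrightarrow> (\<Sum>g<G k. lev_weight k g) = Dsq_sum"
  using sum_by_level[of k "\<lambda>_. 1"] by (simp add: Dsq_sum_def)

lemma Dsq_sum_pos: "Dsq_sum > 0"
  unfolding Dsq_sum_def
proof (intro sum_pos)
  show "{..<n} \<noteq> {}" using n_pos by (auto simp: lessThan_empty_iff)
  fix i assume "i \<in> {..<n}" then show "0 < (D i)^2" using D_pos[of i] by simp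
qed simp

lemma prec_diag_intercept: "prec_diag (0,0) = Dsq_sum" by (simp add: prec_diag_def Dsq_sum_def design_def prior_prec_def)

lemma prec_diag_level: assumes k: "k \<in> {1..K}" shows "prec_diag (k,g) = lev_weight k g + T k"
proof -
  have "(\<Sum>i<n. (D i)^2 * design i (k,g)) = lev_weight k g"
    unfolding lev_weight_def by (intro sum.cong refl) (use k in \<open>auto simp: design_def\<close>)
  moreover have "prior_prec (k,g) = T k" using k by (simp add: prior_prec_def)
  ultimately show ?thesis by (simp add: prec_diag_def)
qed

definition ranef_sq :: "(nat \<times> nat \<Rightarrow> real) \<Rightarrow> real" where
  "ranef_sq x = (\<Sum>k=1..K. \<Sum>g<G k. (x (k,g))^2)"

lemma sum_sq_idx: "(\<Sum>l\<in>I. (x l)^2) = (x (0,0))^2 + ranef_sq x"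
  unfolding ranef_sq_def by (rule sum_idx)

lemma ranef_sq_nonneg: "ranef_sq x \<ge> 0" unfolding ranef_sq_def by (intro sum_nonneg) auto

lemma sq_sum_lev_le_ranef_sq: "(\<Sum>k=1..K. x (k, lev 0 k))^2 \<le> K * ranef_sq x"
proof -
  have "(\<Sum>k=1..K. x (k, lev 0 k))^2 \<le> (\<Sum>k=1..K. (x (k, lev 0 k))^2) * card {1..K}"
    by (rule sum_squared_le_sum_of_squares)
  also have "(\<Sum>k=1..K. (x (k, lev 0 k))^2) \<le> ranef_sq x"
    unfolding ranef_sq_def
  proof (intro sum_mono)
    fix k assume k: "k \<in> {1..K}"
    show "(x (k, lev 0 k))^2 \<le> (\<Sum>g<G k. (x (k,g))^2)"
      using lev_less[of 0 k] k n_pos by (intro member_le_sum[where f = "\<lambda>g. (x (k,g))^2"]) auto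
  qed
  then have "(\<Sum>k=1..K. (x (k, lev 0 k))^2) * card {1..K} \<le> ranef_sq x * card {1..K}"
    by (intro mult_right_mono) auto
  finally show ?thesis by (simp add: mult.commute)
qed

text \<open>The intercept is controlled by the first observation alone: its squared residual is at least
  d/4 x_0^2 - d/2 \<sigma>^2 - \<nu>_0^2 with \<sigma> the sum of its random effects, and after damping by
  \<gamma> \<le> t / (d K) the negative \<sigma>^2 term is absorbed by the prior term t * ranef_sq.\<close>

lemma log_target_coercive: "\<exists>lam C. lam > 0 \<and> (\<forall>x. lam * (\<Sum>l\<in>I. (x l)^2) - C \<le> - L x)"
proof -
  define t where "t = Min (T ` {1..K})"
  have t_le: "t \<le> T k" if "k \<in> {1..K}" for k using that by (simp add: t_def)
  have tpos: "t > 0"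
  proof -
    have "t \<in> T ` {1..K}" unfolding t_def using K_pos by (intro Min_in) auto
    then show ?thesis using T_pos by auto
  qed
  define d where "d = (D 0)^2"
  have dpos: "d > 0" using D_pos[of 0] n_pos by (simp add: d_def)
  define \<gamma> where "\<gamma> = min 1 (t / (d * K))"
  have gpos: "\<gamma> > 0" using tpos dpos K_pos by (simp add: \<gamma>_def)
  have g1: "\<gamma> \<le> 1" by (simp add: \<gamma>_def)
  have gK: "\<gamma> * d * K \<le> t"
  proof -
    have "\<gamma> \<le> t / (d * K)" by (simp add: \<gamma>_def)
    then show ?thesis using dpos K_pos by (simp add: field_simps)
  qed
  define lam where "lam = min (\<gamma> * d / 8) (t / 4)"
  have lpos: "lam > 0" using gpos dpos tpos by (simp add: lam_def)
  have main: "lam * (\<Sum>l\<in>I. (x l)^2) - (nu 0)^2 / 2 \<le> - L x" for x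
  proof -
    define \<sigma> where "\<sigma> = (\<Sum>k=1..K. x (k, lev 0 k))"
    have prior_bound: "(\<Sum>k=1..K. T k * (\<Sum>g<G k. (x (k,g))^2)) \<ge> t * ranef_sq x"
      unfolding ranef_sq_def sum_distrib_left
      by (intro sum_mono mult_right_mono t_le sum_nonneg) auto
    have ranef_sum_bound: "\<sigma>^2 \<le> K * ranef_sq x"
      unfolding \<sigma>_def by (rule sq_sum_lev_le_ranef_sq)
    have first_obs: "(\<Sum>i<n. (nu i - D i * eta K lev i x)^2) \<ge> (nu 0 - D 0 * eta K lev 0 x)^2"
      using n_pos by (intro member_le_sum[where f = "\<lambda>i. (nu i - D i * eta K lev i x)^2"]) auto
    have eta0: "eta K lev 0 x = x (0,0) + \<sigma>" by (simp add: eta_def \<sigma>_def)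
    have first_obs_bound: "(nu 0 - D 0 * eta K lev 0 x)^2 \<ge> d/4 * (x (0,0))^2 - d/2 * \<sigma>^2 - (nu 0)^2"
    proof -
      have "(nu 0 - D 0 * eta K lev 0 x)^2 \<ge> (D 0 * eta K lev 0 x)^2 / 2 - (nu 0)^2"
        by (rule square_diff_lower_bound)
      moreover have "(x (0,0) + \<sigma>)^2 \<ge> (x (0,0))^2/2 - \<sigma>^2" by (rule square_sum_lower_bound)
      then have "d * (x (0,0) + \<sigma>)^2 \<ge> d * ((x (0,0))^2/2 - \<sigma>^2)" using dpos by simp
      moreover have "(D 0 * (x (0,0) + \<sigma>))^2 = d * (x (0,0) + \<sigma>)^2" by (simp add: d_def power_mult_distrib)
      ultimately show ?thesis unfolding eta0 by (simp add: right_diff_distrib)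
    qed
    have scaled_bound: "\<gamma> * (nu 0 - D 0 * eta K lev 0 x)^2 \<ge> \<gamma> * d/4 * (x (0,0))^2 - t/2 * ranef_sq x - (nu 0)^2"
    proof -
      have "\<gamma> * (nu 0 - D 0 * eta K lev 0 x)^2 \<ge> \<gamma> * (d/4 * (x (0,0))^2 - d/2 * \<sigma>^2 - (nu 0)^2)"
        using first_obs_bound gpos by (intro mult_left_mono) auto
      moreover have "\<gamma> * d/2 * \<sigma>^2 \<le> \<gamma> * d / 2 * (K * ranef_sq x)"
        using ranef_sum_bound gpos dpos by (intro mult_left_mono) auto
      moreover have "\<gamma> * d / 2 * (K * ranef_sq x) \<le> t/2 * ranef_sq x"
        using mult_right_mono[OF gK ranef_sq_nonneg[of x]] by (simp add: mult.assoc)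
      moreover have "\<gamma> * (nu 0)^2 \<le> (nu 0)^2" using mult_right_mono[OF g1, of "(nu 0)^2"] by simp
      ultimately show ?thesis by (simp add: algebra_simps)
    qed
    have scaled_le: "\<gamma> * (nu 0 - D 0 * eta K lev 0 x)^2 \<le> (\<Sum>i<n. (nu i - D i * eta K lev i x)^2)"
      using first_obs g1 by (meson dual_order.trans mult_left_le_one_le zero_le_power2 less_imp_le gpos)
    have neg_L: "- L x = 1/2 * (\<Sum>i<n. (nu i - D i * eta K lev i x)^2) + 1/2 * (\<Sum>k=1..K. T k * (\<Sum>g<G k. (x (k,g))^2))"
      by (simp add: log_target_u_def)
    have "lam * (\<Sum>l\<in>I. (x l)^2) = lam * (x (0,0))^2 + lam * ranef_sq x" by (simp add: sum_sq_idx algebra_simps)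
    also have "\<dots> \<le> \<gamma> * d / 8 * (x (0,0))^2 + t / 4 * ranef_sq x"
      by (intro add_mono mult_right_mono) (auto simp: lam_def ranef_sq_nonneg)
    finally show ?thesis using scaled_bound scaled_le prior_bound neg_L by simp
  qed
  show ?thesis using main lpos by blast
qed

lemma borel_measurable_coord: "l \<in> I \<Longrightarrow> (\<lambda>x. x l) \<in> borel_measurable M"
  unfolding PM_def by (rule measurable_coord)

lemma borel_measurable_log_target: "L \<in> borel_measurable M"
proof -
  have "(\<lambda>x. - (1/2) * (\<Sum>i<n. (nu i - D i * (\<Sum>l\<in>I. design i l * x l))^2)
     - (1/2) * (\<Sum>l\<in>I. prior_prec l * (x l)^2)) \<in> borel_measurable M"
    by (intro borel_measurable_diff borel_measurable_times borel_measurable_const borel_measurable_sum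
        borel_measurable_power borel_measurable_coord) auto
  then show ?thesis by (simp add: log_target_eq[abs_def])
qed

lemma log_target_nonpos: "L x \<le> 0"
proof -
  have "(\<Sum>l\<in>I. prior_prec l * (x l)^2) \<ge> 0"
  proof (intro sum_nonneg)
    fix l assume l: "l \<in> I"
    have "prior_prec l \<ge> 0" using l T_pos by (auto simp: prior_prec_def mem_idx less_imp_le)
    then show "prior_prec l * (x l)^2 \<ge> 0" by simp
  qed
  moreover have "(\<Sum>i<n. (nu i - D i * (\<Sum>l\<in>I. design i l * x l))^2) \<ge> 0" by (intro sum_nonneg) auto
  ultimately show ?thesis by (simp add: log_target_eq)
qed

lemma integrable_exp_log_target:
  shows "integrable M (\<lambda>x. exp (L x))"
    and "integrable M (\<lambda>x. exp (L x / 2))"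
    and "\<And>l. l \<in> I \<Longrightarrow> integrable M (\<lambda>x. exp (L x) * (x l)^2)"
proof -
  obtain lam C where lam: "lam > 0" and co: "\<And>x. lam * (\<Sum>l\<in>I. (x l)^2) - C \<le> - L x"
    using log_target_coercive by blast
  let ?S = "\<lambda>x. \<Sum>l\<in>I. (x l)^2"
  have g1: "integrable M (\<lambda>x. exp C * exp (- lam * ?S x))"
    using integrable_exp_neg_sum_sq[OF finite_idx lam] by simp
  have g2: "integrable M (\<lambda>x. exp (C/2) * exp (- (lam/2) * ?S x))"
    using integrable_exp_neg_sum_sq[OF finite_idx, of "lam/2"] lam by simp
  have g3: "integrable M (\<lambda>x. exp C * (2/lam) * exp (- (lam/2) * ?S x))"
    using integrable_exp_neg_sum_sq[OF finite_idx, of "lam/2"] lam by simp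
  have eb: "exp (L x) \<le> exp C * exp (- lam * ?S x)" for x
    using co[of x] by (simp add: exp_add[symmetric])
  show "integrable M (\<lambda>x. exp (L x))"
  proof (rule integrable_dominated[OF g1])
    show "(\<lambda>x. exp (L x)) \<in> borel_measurable M" using borel_measurable_log_target by measurable
    fix x show "\<bar>exp (L x)\<bar> \<le> exp C * exp (- lam * ?S x)" using eb[of x] by simp
  qed
  show "integrable M (\<lambda>x. exp (L x / 2))"
  proof (rule integrable_dominated[OF g2])
    show "(\<lambda>x. exp (L x / 2)) \<in> borel_measurable M" using borel_measurable_log_target by measurable
    fix x
    have "L x / 2 \<le> C/2 + (- (lam/2) * ?S x)" using co[of x] by simp
    then show "\<bar>exp (L x / 2)\<bar> \<le> exp (C/2) * exp (- (lam/2) * ?S x)" by (simp add: exp_add[symmetric])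
  qed
  fix l assume l: "l \<in> I"
  show "integrable M (\<lambda>x. exp (L x) * (x l)^2)"
  proof (rule integrable_dominated[OF g3])
    show "(\<lambda>x. exp (L x) * (x l)^2) \<in> borel_measurable M" using borel_measurable_log_target borel_measurable_coord[OF l] by measurable
    fix x :: "nat \<times> nat \<Rightarrow> real"
    have "(x l)^2 \<le> ?S x" using l by (intro member_le_sum[where f = "\<lambda>l. (x l)^2"]) auto
    then have "exp (L x) * (x l)^2 \<le> exp C * exp (- lam * ?S x) * ?S x"
      using eb[of x] by (intro mult_mono) auto
    also have "\<dots> = exp C * (?S x * exp (- lam * ?S x))" by simp
    also have "\<dots> \<le> exp C * (2 / lam * exp (- (lam/2) * ?S x))"
      by (intro mult_left_mono mult_exp_neg_le lam) (auto intro: sum_nonneg)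
    finally show "\<bar>exp (L x) * (x l)^2\<bar> \<le> exp C * (2/lam) * exp (- (lam/2) * ?S x)" by simp
  qed
qed

lemma emeasure_space_infinite: "emeasure M (space M) = \<infinity>"
proof -
  interpret product_sigma_finite "\<lambda>_. lborel" by standard
  have "card I > 0" using zero_mem_idx[of K G] finite_idx[of K G] card_gt_0_iff by blast
  then show ?thesis
    using emeasure_PiM[of I "\<lambda>_. UNIV"] by (simp add: PM_def space_PiM)
qed

definition norm_const :: real where "norm_const = (\<integral>x. exp (L x) \<partial>M)"

lemma norm_const_pos: "norm_const > 0"
proof -
  have nn: "norm_const \<ge> 0" unfolding norm_const_def by (intro integral_nonneg_AE) auto
  have "norm_const \<noteq> 0"
  proof
    assume "norm_const = 0"
    then have "AE x in M. exp (L x) = 0"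
      using integral_nonneg_eq_0_iff_AE[OF integrable_exp_log_target(1)] by (simp add: norm_const_def)
    then have "AE x in M. False" by simp
    then have "emeasure M (space M) = 0" using AE_iff_measurable[of "space M" M "\<lambda>_. False"] by simp
    then show False using emeasure_space_infinite by simp
  qed
  then show ?thesis using nn by simp
qed

abbreviation "p \<equiv> target_dens n K G lev D T nu"

lemma p_eq: "p x = exp (L x) / norm_const"
  by (simp add: target_dens_def norm_const_def)

lemma p_pos: "p x > 0" using norm_const_pos by (simp add: p_eq)

lemma ln_p: "ln (p x) = L x - ln norm_const"
  using norm_const_pos by (simp add: p_eq ln_div)

text \<open>By coercivity of -L, admissible densities have finite second moments.\<close>

definition admissible :: "((nat \<times> nat \<Rightarrow> real) \<Rightarrow> real) \<Rightarrow> bool" where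
  "admissible r \<longleftrightarrow> is_density M r \<and> integrable M (\<lambda>x. r x * L x)"

lemma admissible_sq: assumes g: "admissible r" and l: "l \<in> I"
  shows "integrable M (\<lambda>x. r x * (x l)^2)"
proof -
  obtain lam C where lam: "lam > 0" and co: "\<And>x. lam * (\<Sum>l\<in>I. (x l)^2) - C \<le> - L x"
    using log_target_coercive by blast
  have rm: "r \<in> borel_measurable M" and rn: "\<And>x. x \<in> space M \<Longrightarrow> 0 \<le> r x"
    and ri: "integrable M r" and rL: "integrable M (\<lambda>x. r x * L x)"
    using g by (auto simp: admissible_def is_density_def)
  have bi: "integrable M (\<lambda>x. (C * r x - r x * L x) / lam)"
    using ri rL by auto
  show ?thesis
  proof (rule integrable_dominated[OF bi])
    show "(\<lambda>x. r x * (x l)^2) \<in> borel_measurable M" using rm borel_measurable_coord[OF l] by measurable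
    fix x assume x: "x \<in> space M"
    have "(x l)^2 \<le> (\<Sum>l\<in>I. (x l)^2)" using l by (intro member_le_sum[where f = "\<lambda>l. (x l)^2"]) auto
    then have "lam * (x l)^2 \<le> lam * (\<Sum>l\<in>I. (x l)^2)" using lam by (intro mult_left_mono) auto
    then have "lam * (x l)^2 \<le> C - L x" using co[of x] by linarith
    then have "r x * (lam * (x l)^2) \<le> r x * (C - L x)" using rn[OF x] by (rule mult_left_mono)
    then have "r x * (x l)^2 \<le> (C * r x - r x * L x) / lam" using lam by (simp add: field_simps)
    moreover have "r x * (x l)^2 \<ge> 0" using rn[OF x] by simp
    ultimately show "\<bar>r x * (x l)^2\<bar> \<le> (C * r x - r x * L x) / lam" by simp
  qed
qed

lemma admissible_measurable: "admissible r \<Longrightarrow> r \<in> borel_measurable M" by (simp add: admissible_def is_density_def)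

lemma admissible_mult: assumes g: "admissible r" and l: "l \<in> I" and l': "l' \<in> I"
  shows "integrable M (\<lambda>x. r x * (x l * x l'))"
proof (rule integrable_dominated)
  show "integrable M (\<lambda>x. r x * (x l)^2 + r x * (x l')^2)" using admissible_sq[OF g l] admissible_sq[OF g l'] by simp
  show "(\<lambda>x. r x * (x l * x l')) \<in> borel_measurable M" using admissible_measurable[OF g] borel_measurable_coord[OF l] borel_measurable_coord[OF l'] by measurable
  fix x assume x: "x \<in> space M"
  have rn: "r x \<ge> 0" using g x by (simp add: admissible_def is_density_def)
  have "\<bar>x l * x l'\<bar> \<le> (x l)^2 + (x l')^2"
  proof -
    have "0 \<le> (\<bar>x l\<bar> - \<bar>x l'\<bar>)^2" by simp
    also have "\<dots> = (x l)^2 + (x l')^2 - 2 * \<bar>x l * x l'\<bar>"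
      unfolding power2_diff power2_abs abs_mult by simp
    finally show ?thesis by simp
  qed
  then have "r x * \<bar>x l * x l'\<bar> \<le> r x * ((x l)^2 + (x l')^2)" using rn by (rule mult_left_mono)
  then show "\<bar>r x * (x l * x l')\<bar> \<le> r x * (x l)^2 + r x * (x l')^2" using rn by (simp add: abs_mult algebra_simps)
qed

lemma admissible_coord: assumes g: "admissible r" and l: "l \<in> I"
  shows "integrable M (\<lambda>x. r x * x l)"
proof (rule integrable_dominated)
  show "integrable M (\<lambda>x. r x + r x * (x l)^2)" using admissible_sq[OF g l] g by (simp add: admissible_def is_density_def)
  show "(\<lambda>x. r x * x l) \<in> borel_measurable M" using admissible_measurable[OF g] borel_measurable_coord[OF l] by measurable
  fix x assume x: "x \<in> space M"
  have rn: "r x \<ge> 0" using g x by (simp add: admissible_def is_density_def)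
  have "\<bar>x l\<bar> \<le> 1 + (x l)^2"
  proof (cases "\<bar>x l\<bar> \<le> 1")
    case False then have "\<bar>x l\<bar> * 1 \<le> \<bar>x l\<bar> * \<bar>x l\<bar>" by (intro mult_left_mono) auto
    also have "\<bar>x l\<bar> * \<bar>x l\<bar> = (x l)^2" by (simp add: power2_eq_square abs_mult_self_eq)
    finally show ?thesis by simp
  qed (use zero_le_power2[of "x l"] in linarith)
  then have "r x * \<bar>x l\<bar> \<le> r x * (1 + (x l)^2)" using rn by (rule mult_left_mono)
  then show "\<bar>r x * x l\<bar> \<le> r x + r x * (x l)^2" using rn by (simp add: abs_mult algebra_simps)
qed

lemma admissible_p: "admissible p"
proof -
  have pm: "p \<in> borel_measurable M" unfolding p_eq[abs_def] using borel_measurable_log_target by measurable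
  have pi: "integrable M p" unfolding p_eq[abs_def] using integrable_exp_log_target(1) by simp
  have p1: "integral\<^sup>L M p = 1" unfolding p_eq[abs_def] using norm_const_pos by (simp add: norm_const_def)
  have pL: "integrable M (\<lambda>x. p x * L x)"
  proof (rule integrable_dominated)
    show "integrable M (\<lambda>x. 2 / norm_const * exp (L x / 2))" using integrable_exp_log_target(2) by simp
    show "(\<lambda>x. p x * L x) \<in> borel_measurable M" using pm borel_measurable_log_target by measurable
    fix x
    have "- L x * exp (- 1 * - L x) \<le> 2 / 1 * exp (- (1/2) * - L x)"
      using log_target_nonpos[of x] by (intro mult_exp_neg_le) auto
    then have "- (exp (L x) * L x) / norm_const \<le> 2 * exp (L x / 2) / norm_const"
      using norm_const_pos by (intro divide_right_mono) (auto simp: mult.commute)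
    then show "\<bar>p x * L x\<bar> \<le> 2 / norm_const * exp (L x / 2)"
      using log_target_nonpos[of x] norm_const_pos by (simp add: p_eq abs_mult abs_of_nonpos)
  qed
  show ?thesis using pm pi p1 pL p_pos by (simp add: admissible_def is_density_def less_imp_le)
qed

section \<open>Moments and Stein identities\<close>

definition expect :: "((nat \<times> nat \<Rightarrow> real) \<Rightarrow> real) \<Rightarrow> ((nat \<times> nat \<Rightarrow> real) \<Rightarrow> real) \<Rightarrow> real" where
  "expect r f = (\<integral>x. r x * f x \<partial>M)"

definition mean :: "((nat \<times> nat \<Rightarrow> real) \<Rightarrow> real) \<Rightarrow> nat \<times> nat \<Rightarrow> real" where
  "mean r l = expect r (\<lambda>x. x l)"

definition moment :: "((nat \<times> nat \<Rightarrow> real) \<Rightarrow> real) \<Rightarrow> nat \<times> nat \<Rightarrow> nat \<times> nat \<Rightarrow> real" where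
  "moment r l l' = expect r (\<lambda>x. x l * x l')"

definition cov :: "((nat \<times> nat \<Rightarrow> real) \<Rightarrow> real) \<Rightarrow> nat \<times> nat \<Rightarrow> nat \<times> nat \<Rightarrow> real" where
  "cov r l l' = moment r l l' - mean r l * mean r l'"

lemma expect_affine: assumes g: "admissible r"
  shows "expect r (\<lambda>x. a + (\<Sum>l\<in>I. c l * x l)) = a + (\<Sum>l\<in>I. c l * mean r l)"
proof -
  have "(\<lambda>x. r x * (a + (\<Sum>l\<in>I. c l * x l))) = (\<lambda>x. a * r x + (\<Sum>l\<in>I. c l * (r x * x l)))"
    by (auto simp: fun_eq_iff algebra_simps sum_distrib_left)
  moreover have "(\<integral>x. a * r x + (\<Sum>l\<in>I. c l * (r x * x l)) \<partial>M) = a * (\<integral>x. r x \<partial>M) + (\<Sum>l\<in>I. c l * (\<integral>x. r x * x l \<partial>M))"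
    using g admissible_coord[OF g]
    by (subst Bochner_Integration.integral_add) (auto simp: admissible_def is_density_def Bochner_Integration.integral_sum intro!: Bochner_Integration.integrable_sum)
  ultimately show ?thesis using g by (simp add: expect_def mean_def admissible_def is_density_def)
qed

lemma admissible_affine_mult: assumes g: "admissible r"
  shows "integrable M (\<lambda>x. r x * ((a + (\<Sum>l\<in>I. c l * x l)) * (b + (\<Sum>l\<in>I. d l * x l))))"
    and "expect r (\<lambda>x. (a + (\<Sum>l\<in>I. c l * x l)) * (b + (\<Sum>l\<in>I. d l * x l)))
       = a * b + a * (\<Sum>l\<in>I. d l * mean r l) + b * (\<Sum>l\<in>I. c l * mean r l)
         + (\<Sum>l\<in>I. \<Sum>l'\<in>I. c l * d l' * moment r l l')"
proof -
  let ?F = "\<lambda>x. (a * b) * r x + (\<Sum>l\<in>I. (a * d l) * (r x * x l)) + (\<Sum>l\<in>I. (b * c l) * (r x * x l))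
       + (\<Sum>l\<in>I. \<Sum>l'\<in>I. (c l * d l') * (r x * (x l * x l')))"
  have eq: "(\<lambda>x. r x * ((a + (\<Sum>l\<in>I. c l * x l)) * (b + (\<Sum>l\<in>I. d l * x l)))) = ?F"
  proof
    fix x
    have "(a + (\<Sum>l\<in>I. c l * x l)) * (b + (\<Sum>l\<in>I. d l * x l))
      = a * b + a * (\<Sum>l\<in>I. d l * x l) + b * (\<Sum>l\<in>I. c l * x l) + (\<Sum>l\<in>I. c l * x l) * (\<Sum>l\<in>I. d l * x l)"
      by (simp add: algebra_simps)
    also have "(\<Sum>l\<in>I. c l * x l) * (\<Sum>l\<in>I. d l * x l) = (\<Sum>l\<in>I. \<Sum>l'\<in>I. c l * x l * (d l' * x l'))"
      by (rule sum_product)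
    finally show "r x * ((a + (\<Sum>l\<in>I. c l * x l)) * (b + (\<Sum>l\<in>I. d l * x l))) = ?F x"
      by (simp add: algebra_simps sum_distrib_left)
  qed
  have i0: "integrable M r" using g by (simp add: admissible_def is_density_def)
  have i1: "\<And>l. l \<in> I \<Longrightarrow> integrable M (\<lambda>x. r x * x l)" by (rule admissible_coord[OF g])
  have i2: "\<And>l l'. l \<in> I \<Longrightarrow> l' \<in> I \<Longrightarrow> integrable M (\<lambda>x. r x * (x l * x l'))" by (rule admissible_mult[OF g])
  have iF: "integrable M ?F"
    using i0 i1 i2 by (intro Bochner_Integration.integrable_add Bochner_Integration.integrable_sum Bochner_Integration.integrable_mult_right) auto
  then show "integrable M (\<lambda>x. r x * ((a + (\<Sum>l\<in>I. c l * x l)) * (b + (\<Sum>l\<in>I. d l * x l))))"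
    by (simp only: eq)
  have "integral\<^sup>L M ?F = (a*b) * integral\<^sup>L M r + (\<Sum>l\<in>I. (a * d l) * (\<integral>x. r x * x l \<partial>M))
     + (\<Sum>l\<in>I. (b * c l) * (\<integral>x. r x * x l \<partial>M)) + (\<Sum>l\<in>I. \<Sum>l'\<in>I. (c l * d l') * (\<integral>x. r x * (x l * x l') \<partial>M))"
    using i0 i1 i2
    by (simp add: Bochner_Integration.integral_add Bochner_Integration.integrable_sum Bochner_Integration.integral_sum Bochner_Integration.integral_mult_right Bochner_Integration.integrable_add)
  then show "expect r (\<lambda>x. (a + (\<Sum>l\<in>I. c l * x l)) * (b + (\<Sum>l\<in>I. d l * x l)))
       = a * b + a * (\<Sum>l\<in>I. d l * mean r l) + b * (\<Sum>l\<in>I. c l * mean r l)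
         + (\<Sum>l\<in>I. \<Sum>l'\<in>I. c l * d l' * moment r l l')"
    using g unfolding expect_def eq by (simp add: admissible_def is_density_def mean_def moment_def expect_def sum_distrib_left mult.assoc)
qed

lemma dlog_affine: "j \<in> I \<Longrightarrow> dlog j x = beta j + (\<Sum>l\<in>I. (- prec j l) * x l)"
  by (simp add: dlog_eq sum_negf)

lemma sum_idx_subset: fixes c x :: "nat \<times> nat \<Rightarrow> real" assumes U: "U \<subseteq> I" and j: "j \<in> U" and c: "\<And>l. l \<notin> U \<Longrightarrow> c l = 0"
  shows "(\<Sum>l\<in>I. c l * x l) = c j * x j + (\<Sum>l\<in>U-{j}. c l * x l)"
proof -
  have "(\<Sum>l\<in>I. c l * x l) = (\<Sum>l\<in>U. c l * x l)"
    using U c by (intro sum.mono_neutral_right) auto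
  also have "\<dots> = c j * x j + (\<Sum>l\<in>U-{j}. c l * x l)"
    using j U finite_subset[OF U finite_idx] by (simp add: sum.remove)
  finally show ?thesis .
qed

lemma shear_eq_update: assumes U: "U \<subseteq> I" and j: "j \<in> U" and c: "\<And>l. l \<notin> U \<Longrightarrow> c l = 0"
  shows "shear U j (1 + s * c j) (s * a) (\<lambda>l. s * c l) x = x(j := x j + s * (a + (\<Sum>l\<in>I. c l * x l)))"
proof -
  have "(\<Sum>l\<in>U-{j}. s * c l * x l) = s * (\<Sum>l\<in>U-{j}. c l * x l)"
    by (simp add: sum_distrib_left mult.assoc)
  moreover have "(\<Sum>l\<in>I. c l * x l) = c j * x j + (\<Sum>l\<in>U-{j}. c l * x l)" by (rule sum_idx_subset[OF U j c])
  ultimately show ?thesis unfolding shear_def by (simp add: algebra_simps)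
qed

lemma admissible_is_density: "admissible r \<Longrightarrow> is_density M r"
  by (simp add: admissible_def is_density_def)

lemma log_target_shear:
  fixes a s :: real and c :: "nat \<times> nat \<Rightarrow> real"
  assumes U: "U \<subseteq> I" and j: "j \<in> U" and c: "\<And>l. l \<notin> U \<Longrightarrow> c l = 0"
  shows "L (shear U j (1 + s * c j) (s * a) (\<lambda>l. s * c l) x)
    = L x + s * ((a + (\<Sum>l\<in>I. c l * x l)) * dlog j x)
      - s^2 / 2 * prec_diag j * ((a + (\<Sum>l\<in>I. c l * x l)) * (a + (\<Sum>l\<in>I. c l * x l)))"
proof -
  have "shear U j (1 + s * c j) (s * a) (\<lambda>l. s * c l) x = x(j := x j + s * (a + (\<Sum>l\<in>I. c l * x l)))"
    by (rule shear_eq_update[OF U j c])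
  then show ?thesis by (simp add: log_target_update[OF subsetD[OF U j]] power2_eq_square algebra_simps)
qed

lemma Vobj_perturb:
  fixes r :: "(nat \<times> nat \<Rightarrow> real) \<Rightarrow> real" and a s :: real and c :: "nat \<times> nat \<Rightarrow> real"
  assumes r: "admissible r" and rl: "integrable M (\<lambda>x. r x * ln (r x))"
    and U: "U \<subseteq> I" and j: "j \<in> U" and c: "\<And>l. l \<notin> U \<Longrightarrow> c l = 0"
    and \<alpha>: "1 + s * c j \<noteq> 0"
  defines "h \<equiv> \<lambda>x. a + (\<Sum>l\<in>I. c l * x l)"
  shows "integrable M (\<lambda>x. perturb r U j a c s x * ln (p x))"
    and "Vobj M (perturb r U j a c s) p = Vobj M r p + s * expect r (\<lambda>x. h x * dlog j x)
        - s^2 / 2 * prec_diag j * expect r (\<lambda>x. h x * h x) + ln \<bar>1 + s * c j\<bar>"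
proof -
  let ?T = "shear U j (1 + s * c j) (s * a) (\<lambda>l. s * c l)"
  let ?rs = "perturb r U j a c s"
  have J: "finite I" "j \<in> I" "U \<subseteq> I" using U j by auto
  have rm: "r \<in> borel_measurable M" and ri: "integrable M r" and r1: "integral\<^sup>L M r = 1"
    and rL: "integrable M (\<lambda>x. r x * L x)" using r by (auto simp: admissible_def is_density_def)
  have lnp: "(\<lambda>x. ln (p x)) \<in> borel_measurable M"
    using borel_measurable_log_target by (simp add: ln_p) measurable
  note CoV = integral_shear_pushforward[OF J \<alpha> rm lnp, where a="s * a" and c="\<lambda>l. s * c l"]
  note ent = entropy_shear_pushforward[OF J \<alpha> admissible_is_density[OF r] rl,
      where a="s * a" and c="\<lambda>l. s * c l"]
  have dlog: "dlog j = (\<lambda>x. beta j + (\<Sum>l\<in>I. (- prec j l) * x l))" by (rule ext) (rule dlog_affine[OF J(2)])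
  have hd: "integrable M (\<lambda>x. r x * (h x * dlog j x))"
    unfolding h_def dlog by (rule admissible_affine_mult(1)[OF r])
  have hh: "integrable M (\<lambda>x. r x * (h x * h x))"
    unfolding h_def by (rule admissible_affine_mult(1)[OF r])
  have pt: "r x * ln (p (?T x)) = r x * L x + s * (r x * (h x * dlog j x))
      - s^2/2 * prec_diag j * (r x * (h x * h x)) - ln norm_const * r x" for x
  proof -
    have LT: "L (?T x) = L x + s * (h x * dlog j x) - s^2 / 2 * prec_diag j * (h x * h x)"
      unfolding h_def by (rule log_target_shear[OF U j c])
    show ?thesis unfolding ln_p LT by (simp add: algebra_simps)
  qed
  have int: "integrable M (\<lambda>x. r x * L x + s * (r x * (h x * dlog j x))
      - s^2/2 * prec_diag j * (r x * (h x * h x)) - ln norm_const * r x)"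
    using rL hd hh ri by simp
  then show rs_lnp: "integrable M (\<lambda>x. ?rs x * ln (p x))" using CoV(2) by (simp only: pt)
  have "(\<integral>x. ?rs x * ln (p x) \<partial>M) = (\<integral>x. r x * L x \<partial>M) + s * expect r (\<lambda>x. h x * dlog j x)
      - s^2/2 * prec_diag j * expect r (\<lambda>x. h x * h x) - ln norm_const"
    unfolding CoV(1) pt using rL hd hh ri r1 by (simp add: expect_def)
  moreover have "Vobj M ?rs p = (\<integral>x. ?rs x * ln (p x) \<partial>M) - (\<integral>x. ?rs x * ln (?rs x) \<partial>M)"
    unfolding Vobj_def using rs_lnp ent(1) by (simp add: right_diff_distrib)
  moreover have "Vobj M r p = (\<integral>x. r x * L x \<partial>M) - ln norm_const - (\<integral>x. r x * ln (r x) \<partial>M)"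
  proof -
    have "Vobj M r p = (\<integral>x. (r x * L x - ln norm_const * r x) - r x * ln (r x) \<partial>M)"
      unfolding Vobj_def by (rule Bochner_Integration.integral_cong[OF refl]) (simp add: ln_p algebra_simps)
    then show ?thesis using rL ri rl r1 by simp
  qed
  ultimately show "Vobj M ?rs p = Vobj M r p + s * expect r (\<lambda>x. h x * dlog j x)
        - s^2 / 2 * prec_diag j * expect r (\<lambda>x. h x * h x) + ln \<bar>1 + s * c j\<bar>"
    using ent(2) by simp
qed

lemma stein_identity:
  fixes r :: "(nat \<times> nat \<Rightarrow> real) \<Rightarrow> real" and a :: real and c :: "nat \<times> nat \<Rightarrow> real"
  assumes r: "admissible r" and rl: "integrable M (\<lambda>x. r x * ln (r x))"
    and U: "U \<subseteq> I" and j: "j \<in> U" and c: "\<And>l. l \<notin> U \<Longrightarrow> c l = 0"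
    and opt: "\<And>s. 1 + s * c j \<noteq> 0 \<Longrightarrow> Vobj M (perturb r U j a c s) p \<le> Vobj M r p"
  shows "expect r (\<lambda>x. (a + (\<Sum>l\<in>I. c l * x l)) * dlog j x) = - c j"
proof (rule eq_of_perturbation_nonpos)
  fix s :: real assume s: "1 + s * c j \<noteq> 0"
  show "s * expect r (\<lambda>x. (a + (\<Sum>l\<in>I. c l * x l)) * dlog j x)
      - s^2 / 2 * (prec_diag j * expect r (\<lambda>x. (a + (\<Sum>l\<in>I. c l * x l)) * (a + (\<Sum>l\<in>I. c l * x l))))
      + ln \<bar>1 + s * c j\<bar> \<le> 0"
    using Vobj_perturb(2)[where a=a and s=s and c=c, OF r rl U j c s] opt[OF s] by (simp add: mult.assoc)
qed

lemma prec_cov_of_stein: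
  assumes g: "admissible r" and i: "i \<in> I" and j: "j \<in> I"
    and S0: "expect r (\<lambda>x. (1 + (\<Sum>l\<in>I. 0 * x l)) * dlog j x) = 0"
    and S1: "expect r (\<lambda>x. (0 + (\<Sum>l\<in>I. (if l = i then 1 else 0) * x l)) * dlog j x) = - (if i = j then 1 else 0)"
  shows "(\<Sum>l\<in>I. prec j l * cov r i l) = (if i = j then 1 else 0)"
proof -
  have dLa: "dlog j = (\<lambda>x. beta j + (\<Sum>l\<in>I. (- prec j l) * x l))" by (rule ext) (rule dlog_affine[OF j])
  have e0: "expect r (\<lambda>x. (1 + (\<Sum>l\<in>I. 0 * x l)) * dlog j x) = beta j + (\<Sum>l\<in>I. (- prec j l) * mean r l)"
    unfolding dLa using admissible_affine_mult(2)[OF g, of 1 "\<lambda>_. 0" "beta j" "\<lambda>l. - prec j l"] by simp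
  have e1: "expect r (\<lambda>x. (0 + (\<Sum>l\<in>I. (if l = i then 1 else 0) * x l)) * dlog j x)
      = beta j * mean r i + (\<Sum>l'\<in>I. (- prec j l') * moment r i l')"
  proof -
    have "expect r (\<lambda>x. (0 + (\<Sum>l\<in>I. (if l = i then 1 else 0) * x l)) * dlog j x)
      = 0 * beta j + 0 * (\<Sum>l\<in>I. - prec j l * mean r l) + beta j * (\<Sum>l\<in>I. (if l = i then 1 else 0) * mean r l)
         + (\<Sum>l\<in>I. \<Sum>l'\<in>I. (if l = i then 1 else 0) * - prec j l' * moment r l l')"
      unfolding dLa by (rule admissible_affine_mult(2)[OF g])
    also have "(\<Sum>l\<in>I. (if l = i then 1 else 0) * mean r l) = mean r i"
    proof -
      have "(\<Sum>l\<in>I. (if l = i then 1 else 0) * mean r l) = (\<Sum>l\<in>I. (if l = i then mean r l else 0))"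
        by (intro sum.cong) auto
      then show ?thesis using i by (simp add: sum.delta)
    qed
    also have "(\<Sum>l\<in>I. \<Sum>l'\<in>I. (if l = i then 1 else 0) * - prec j l' * moment r l l') = (\<Sum>l'\<in>I. (- prec j l') * moment r i l')"
    proof -
      have "(\<Sum>l\<in>I. \<Sum>l'\<in>I. (if l = i then 1 else 0) * - prec j l' * moment r l l')
          = (\<Sum>l\<in>I. (if l = i then (\<Sum>l'\<in>I. - prec j l' * moment r l l') else 0))"
        by (intro sum.cong) auto
      then show ?thesis using i by (simp add: sum.delta)
    qed
    finally show ?thesis by simp
  qed
  have b: "beta j = (\<Sum>l\<in>I. prec j l * mean r l)" using S0 e0 by (simp add: sum_negf)
  have "(\<Sum>l\<in>I. prec j l * cov r i l) = (\<Sum>l\<in>I. prec j l * moment r i l) - mean r i * (\<Sum>l\<in>I. prec j l * mean r l)"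
    by (simp add: cov_def right_diff_distrib sum_subtractf sum_distrib_left algebra_simps)
  also have "\<dots> = - (beta j * mean r i + (\<Sum>l'\<in>I. (- prec j l') * moment r i l'))"
    by (simp add: b sum_negf algebra_simps)
  also have "\<dots> = (if i = j then 1 else 0)" using S1 e1 by simp
  finally show ?thesis .
qed

lemma Vobj_nonpos:
  assumes d: "is_density M r" and i1: "integrable M (\<lambda>x. r x * ln (r x))"
    and i2: "integrable M (\<lambda>x. r x * ln (p x))"
  shows "Vobj M r p \<le> 0"
proof -
  have pg: "admissible p" by (rule admissible_p)
  have pi: "integrable M p" and p1: "integral\<^sup>L M p = 1" using pg by (auto simp: admissible_def is_density_def)
  have ri: "integrable M r" and r1: "integral\<^sup>L M r = 1" and rn: "\<And>x. x \<in> space M \<Longrightarrow> 0 \<le> r x"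
    using d by (auto simp: is_density_def)
  have "Vobj M r p = integral\<^sup>L M (\<lambda>x. r x * ln (p x) - r x * ln (r x))"
    by (simp add: Vobj_def right_diff_distrib)
  also have "\<dots> \<le> integral\<^sup>L M (\<lambda>x. p x - r x)"
  proof (rule Bochner_Integration.integral_mono)
    show "integrable M (\<lambda>x. r x * ln (p x) - r x * ln (r x))" using i1 i2 by simp
    show "integrable M (\<lambda>x. p x - r x)" using pi ri by simp
    fix x assume x: "x \<in> space M"
    show "r x * ln (p x) - r x * ln (r x) \<le> p x - r x"
    proof (cases "r x = 0")
      case True then show ?thesis using p_pos[of x] by simp
    next
      case False
      then have rp: "r x > 0" using rn[OF x] by simp
      have "ln (p x / r x) \<le> p x / r x - 1" using p_pos[of x] rp by (intro ln_le_minus_one) simp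
      then have "r x * ln (p x / r x) \<le> r x * (p x / r x - 1)" using rp by (intro mult_left_mono) auto
      then show ?thesis using rp p_pos[of x] by (simp add: ln_div right_diff_distrib)
    qed
  qed
  also have "\<dots> = 0" using pi ri p1 r1 by simp
  finally show ?thesis .
qed

lemma integrable_p_ln_p: "integrable M (\<lambda>x. p x * ln (p x))"
proof -
  have "integrable M (\<lambda>x. p x * L x - ln norm_const * p x)" using admissible_p by (simp add: admissible_def is_density_def)
  then show ?thesis by (simp add: ln_p right_diff_distrib mult.commute)
qed

lemma stein_identity_p:
  assumes U: "U \<subseteq> I" and j: "j \<in> U" and c: "\<And>l. l \<notin> U \<Longrightarrow> c l = 0"
  shows "expect p (\<lambda>x. (a + (\<Sum>l\<in>I. c l * x l)) * dlog j x) = - c j"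
proof (rule stein_identity[OF admissible_p integrable_p_ln_p U j c])
  fix s assume s: "1 + s * c j \<noteq> 0"
  have J: "finite I" "j \<in> I" "U \<subseteq> I" using U j by auto
  have "Vobj M (perturb p U j a c s) p \<le> 0"
  proof (rule Vobj_nonpos)
    show "is_density M (perturb p U j a c s)"
      using admissible_is_density[OF admissible_p] s by (intro is_density_shear_pushforward J)
    show "integrable M (\<lambda>x. perturb p U j a c s x * ln (perturb p U j a c s x))"
      using admissible_is_density[OF admissible_p] s integrable_p_ln_p
      by (intro entropy_shear_pushforward(1) J)
    show "integrable M (\<lambda>x. perturb p U j a c s x * ln (p x))"
      by (rule Vobj_perturb(1)[where a=a and s=s and c=c, OF admissible_p integrable_p_ln_p U j c s])
  qed
  then show "Vobj M (perturb p U j a c s) p \<le> Vobj M p p" by (simp add: Vobj_def)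
qed

lemma prec_cov_p: assumes i: "i \<in> I" and j: "j \<in> I"
  shows "(\<Sum>l\<in>I. prec j l * cov p i l) = (if i = j then 1 else 0)"
proof (rule prec_cov_of_stein[OF admissible_p i j])
  have c0: "\<And>l. l \<notin> I \<Longrightarrow> (if l = i then 1 else (0::real)) = 0" using i by auto
  show "expect p (\<lambda>x. (1 + (\<Sum>l\<in>I. 0 * x l)) * dlog j x) = 0"
    using stein_identity_p[of I j "\<lambda>_. 0" 1] j by simp
  show "expect p (\<lambda>x. (0 + (\<Sum>l\<in>I. (if l = i then 1 else 0) * x l)) * dlog j x) = - (if i = j then 1 else 0)"
    using stein_identity_p[OF order_refl j c0, where a=0] by simp
qed

lemma cov_sym: "cov r i l = cov r l i"
  by (simp add: cov_def moment_def mult.commute)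

lemma expect_affine_square: assumes g: "admissible r"
  shows "expect r (\<lambda>x. (a + (\<Sum>l\<in>I. v l * x l)) * (a + (\<Sum>l\<in>I. v l * x l)))
     = (a + (\<Sum>l\<in>I. v l * mean r l))^2 + (\<Sum>i\<in>I. \<Sum>l\<in>I. v i * v l * cov r i l)"
proof -
  have "(\<Sum>i\<in>I. \<Sum>l\<in>I. v i * v l * cov r i l) = (\<Sum>i\<in>I. \<Sum>l\<in>I. v i * v l * moment r i l) - (\<Sum>l\<in>I. v l * mean r l)^2"
  proof -
    have "(\<Sum>l\<in>I. v l * mean r l)^2 = (\<Sum>i\<in>I. \<Sum>l\<in>I. v i * mean r i * (v l * mean r l))"
      by (simp add: power2_eq_square sum_product)
    then show ?thesis
      by (simp add: cov_def right_diff_distrib sum_subtractf algebra_simps)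
  qed
  then show ?thesis
    using admissible_affine_mult(2)[OF g, of a v a v] by (simp add: power2_eq_square algebra_simps)
qed

lemma cov_quad_nonneg: assumes g: "admissible r"
  shows "0 \<le> (\<Sum>i\<in>I. \<Sum>l\<in>I. v i * v l * cov r i l)"
proof -
  define a where "a = - (\<Sum>l\<in>I. v l * mean r l)"
  have "expect r (\<lambda>x. (a + (\<Sum>l\<in>I. v l * x l)) * (a + (\<Sum>l\<in>I. v l * x l))) \<ge> 0"
    unfolding expect_def using g by (intro integral_nonneg_AE AE_I2) (auto simp: admissible_def is_density_def)
  then show ?thesis using expect_affine_square[OF g, of a v] by (simp add: a_def)
qed

lemma var_dens_lin: assumes g: "admissible r"
  shows "var_dens M r (lin I v) = (\<Sum>i\<in>I. \<Sum>l\<in>I. v i * v l * cov r i l)"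
proof -
  have e2: "(\<integral>x. r x * (lin I v x)^2 \<partial>M) = expect r (\<lambda>x. (0 + (\<Sum>l\<in>I. v l * x l)) * (0 + (\<Sum>l\<in>I. v l * x l)))"
    by (simp add: expect_def lin_def power2_eq_square)
  have e1: "(\<integral>x. r x * lin I v x \<partial>M) = 0 + (\<Sum>l\<in>I. v l * mean r l)"
    using expect_affine[OF g, of 0 v] by (simp add: expect_def lin_def)
  show ?thesis unfolding var_dens_def e2 e1 expect_affine_square[OF g] by simp
qed

lemma var_dens_lin_nonneg: "admissible r \<Longrightarrow> 0 \<le> var_dens M r (lin I v)"
  using var_dens_lin cov_quad_nonneg by simp

lemma prec_cov_p_apply: assumes i: "i \<in> I"
  shows "(\<Sum>l\<in>I. (\<Sum>j\<in>I. prec l j * w j) * cov p i l) = w i"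
proof -
  have "(\<Sum>l\<in>I. (\<Sum>j\<in>I. prec l j * w j) * cov p i l) = (\<Sum>l\<in>I. \<Sum>j\<in>I. w j * (prec j l * cov p i l))"
    unfolding sum_distrib_right by (intro sum.cong refl) (metis prec_sym mult.commute mult.left_commute)
  also have "\<dots> = (\<Sum>j\<in>I. \<Sum>l\<in>I. w j * (prec j l * cov p i l))" by (rule sum.swap)
  also have "\<dots> = (\<Sum>j\<in>I. w j * (\<Sum>l\<in>I. prec j l * cov p i l))" by (simp add: sum_distrib_left)
  also have "\<dots> = (\<Sum>j\<in>I. (if j = i then w i else 0))"
    by (intro sum.cong refl) (auto simp: prec_cov_p[OF i])
  also have "\<dots> = w i" using i by (simp add: sum.delta)
  finally show ?thesis .
qed

text \<open>Cauchy-Schwarz for the inner product given by Q, using Cov_p = Q\<inverse>.\<close>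

lemma var_p_lower_bound: assumes gam: "(\<Sum>i\<in>I. \<Sum>j\<in>I. prec i j * w j * w i) > 0"
  shows "(\<Sum>i\<in>I. v i * w i)^2 / (\<Sum>i\<in>I. \<Sum>j\<in>I. prec i j * w j * w i) \<le> var_dens M p (lin I v)"
proof -
  define \<gamma> where "\<gamma> = (\<Sum>i\<in>I. \<Sum>j\<in>I. prec i j * w j * w i)"
  define y where "y = (\<lambda>i. \<Sum>j\<in>I. prec i j * w j)"
  define C where "C = cov p"
  define Bv where "Bv = (\<Sum>i\<in>I. \<Sum>l\<in>I. v i * v l * C i l)"
  define \<beta> where "\<beta> = (\<Sum>i\<in>I. v i * w i)"
  have gp: "\<gamma> > 0" using gam by (simp add: \<gamma>_def)
  have Bvy: "(\<Sum>i\<in>I. \<Sum>l\<in>I. v i * y l * C i l) = \<beta>"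
  proof -
    have "(\<Sum>i\<in>I. \<Sum>l\<in>I. v i * y l * C i l) = (\<Sum>i\<in>I. v i * (\<Sum>l\<in>I. y l * C i l))"
      by (simp add: sum_distrib_left mult.assoc)
    also have "\<dots> = (\<Sum>i\<in>I. v i * w i)" by (intro sum.cong refl) (simp add: y_def C_def prec_cov_p_apply)
    finally show ?thesis by (simp add: \<beta>_def)
  qed
  have Byv: "(\<Sum>i\<in>I. \<Sum>l\<in>I. y i * v l * C i l) = \<beta>"
  proof -
    have "(\<Sum>i\<in>I. \<Sum>l\<in>I. y i * v l * C i l) = (\<Sum>l\<in>I. \<Sum>i\<in>I. y i * v l * C i l)"
      by (rule sum.swap)
    also have "\<dots> = (\<Sum>l\<in>I. \<Sum>i\<in>I. v l * y i * C l i)"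
      by (intro sum.cong refl) (simp add: C_def cov_sym[of p i l for i l] mult.commute)
    finally have "(\<Sum>i\<in>I. \<Sum>l\<in>I. y i * v l * C i l) = (\<Sum>l\<in>I. \<Sum>i\<in>I. v l * y i * C l i)" .
    then show ?thesis using Bvy by simp
  qed
  have By: "(\<Sum>i\<in>I. \<Sum>l\<in>I. y i * y l * C i l) = \<gamma>"
  proof -
    have "(\<Sum>i\<in>I. \<Sum>l\<in>I. y i * y l * C i l) = (\<Sum>i\<in>I. y i * (\<Sum>l\<in>I. y l * C i l))"
      by (simp add: sum_distrib_left mult.assoc)
    also have "\<dots> = (\<Sum>i\<in>I. y i * w i)" by (intro sum.cong refl) (simp add: y_def C_def prec_cov_p_apply)
    also have "\<dots> = \<gamma>" by (simp add: y_def \<gamma>_def sum_distrib_right)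
    finally show ?thesis .
  qed
  define t where "t = - \<beta> / \<gamma>"
  have "0 \<le> (\<Sum>i\<in>I. \<Sum>l\<in>I. (v i + t * y i) * (v l + t * y l) * C i l)"
    unfolding C_def by (rule cov_quad_nonneg[OF admissible_p])
  also have "\<dots> = Bv + t * \<beta> + t * \<beta> + t^2 * \<gamma>"
    unfolding bilinear_shift_expand Bvy Byv By Bv_def ..
  also have "\<dots> = Bv - \<beta>^2 / \<gamma>" using gp by (simp add: t_def power2_eq_square field_simps)
  finally have "\<beta>^2 / \<gamma> \<le> Bv" by simp
  moreover have "var_dens M p (lin I v) = Bv" unfolding Bv_def C_def by (rule var_dens_lin[OF admissible_p])
  ultimately show ?thesis by (simp add: \<beta>_def \<gamma>_def)
qed

section \<open>The optimal fully factorised density\<close>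

context
  fixes q :: "(nat \<times> nat \<Rightarrow> real) \<Rightarrow> real"
  assumes q_FF: "q \<in> FF_family K G p"
begin

lemma q_density: "is_density M q" and q_ln_q: "integrable M (\<lambda>x. q x * ln (q x))"
  and q_ln_p: "integrable M (\<lambda>x. q x * ln (p x))"
  using q_FF by (auto simp: FF_family_def)

lemma admissible_q: "admissible q"
proof -
  have "integrable M (\<lambda>x. q x * ln (p x) + ln norm_const * q x)" using q_ln_p q_density by (simp add: is_density_def)
  moreover have "(\<lambda>x. q x * ln (p x) + ln norm_const * q x) = (\<lambda>x. q x * L x)"
    by (auto simp: ln_p algebra_simps)
  ultimately show ?thesis using q_density by (simp add: admissible_def is_density_def)
qed

lemma q_factor_block:
  assumes k: "k \<in> {0..K}"
  obtains f H where "\<And>y z. y \<in> space (PM (blk G k)) \<Longrightarrow> z \<in> space (PM (I - blk G k)) \<Longrightarrow>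
    q (merge (blk G k) (I - blk G k) (y, z)) = f y * H z"
proof -
  obtain f where fq: "\<And>x. x \<in> space M \<Longrightarrow> q x = (\<Prod>k\<in>{0..K}. f k (restrict x (blk G k)))"
    using q_FF by (auto simp: FF_family_def)
  define B where "B = blk G k"
  define R where "R = I - B"
  have BR: "B \<inter> R = {}" "I = B \<union> R" using blk_subset_idx[OF k] by (auto simp: R_def B_def)
  define H where "H = (\<lambda>z. \<Prod>k'\<in>{0..K}-{k}. f k' (restrict z (blk G k')))"
  have "q (merge B R (y, z)) = f k y * H z"
    if y: "y \<in> space (PM B)" and z: "z \<in> space (PM R)" for y z :: "nat \<times> nat \<Rightarrow> real"
  proof -
    have ms: "merge B R (y, z) \<in> space M" using y z BR by (simp add: PM_def space_PiM)
    have r1: "restrict (merge B R (y, z)) B = y"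
      using y BR by (simp add: PM_def space_PiM PiE_def extensional_restrict)
    have r2: "restrict (merge B R (y, z)) (blk G k') = restrict z (blk G k')"
      if k': "k' \<in> {0..K}-{k}" for k'
    proof -
      have "blk G k' \<subseteq> R"
        using k' blk_subset_idx[of k' K G] blk_disjoint[of k' k G] by (auto simp: R_def B_def)
      then show ?thesis using BR by (auto simp: restrict_def fun_eq_iff merge_def)
    qed
    have "q (merge B R (y, z)) = f k (restrict (merge B R (y, z)) B)
        * (\<Prod>k'\<in>{0..K}-{k}. f k' (restrict (merge B R (y, z)) (blk G k')))"
      using fq[OF ms] k by (simp add: prod.remove B_def)
    also have "\<dots> = f k y * H z" unfolding H_def using r1 r2 by simp
    finally show ?thesis .
  qed
  then have "q (merge (blk G k) (I - blk G k) (y, z)) = f k y * H z"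
    if "y \<in> space (PM (blk G k))" and "z \<in> space (PM (I - blk G k))" for y z
    using that unfolding B_def R_def .
  then show ?thesis by (rule that)
qed

lemma cov_q_off_block:
  assumes k: "k \<in> {0..K}" and i: "i \<in> blk G k" and l: "l \<in> I" and lB: "l \<notin> blk G k"
  shows "cov q i l = 0"
proof -
  let ?B = "blk G k" and ?R = "I - blk G k"
  obtain f H where qm: "\<And>y z. y \<in> space (PM ?B) \<Longrightarrow> z \<in> space (PM ?R) \<Longrightarrow>
      q (merge ?B ?R (y, z)) = f y * H z"
    by (rule q_factor_block[OF k]) (rule that)
  have BR: "?B \<inter> ?R = {}" "finite ?B" "finite ?R" and IBR: "?B \<union> ?R = I"
    using blk_subset_idx[OF k] by auto
  have split: "expect q (\<lambda>x. \<phi> (restrict x ?B) * \<psi> (restrict x ?R))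
      = (\<integral>y. f y * \<phi> y \<partial>PM ?B) * (\<integral>z. H z * \<psi> z \<partial>PM ?R)"
    if "integrable M (\<lambda>x. q x * (\<phi> (restrict x ?B) * \<psi> (restrict x ?R)))"
    for \<phi> \<psi> :: "(nat \<times> nat \<Rightarrow> real) \<Rightarrow> real"
  proof -
    have "expect q (\<lambda>x. \<phi> (restrict x ?B) * \<psi> (restrict x ?R))
        = (\<integral>x. q x * (\<phi> (restrict x ?B) * \<psi> (restrict x ?R)) \<partial>PM (?B \<union> ?R))"
      unfolding expect_def IBR ..
    also have "\<dots> = (\<integral>y. f y * \<phi> y \<partial>PM ?B) * (\<integral>z. H z * \<psi> z \<partial>PM ?R)"
      by (rule integral_PM_merge_product[OF BR(1-3), where f=f and H=H])
        (use qm that blk_subset_idx[OF k] in \<open>simp_all add: Un_absorb1\<close>)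
    finally show ?thesis .
  qed
  have iI: "i \<in> I" using i blk_subset_idx[OF k] by blast
  let ?a1 = "\<integral>y. f y * 1 \<partial>PM ?B" and ?ai = "\<integral>y. f y * y i \<partial>PM ?B"
  let ?b1 = "\<integral>z. H z * 1 \<partial>PM ?R" and ?bl = "\<integral>z. H z * z l \<partial>PM ?R"
  have one: "?a1 * ?b1 = 1"
    using split[of "\<lambda>_. 1" "\<lambda>_. 1"] admissible_q by (simp add: admissible_def is_density_def expect_def)
  have "moment q i l = ?ai * ?bl"
    using split[of "\<lambda>y. y i" "\<lambda>z. z l"] admissible_mult[OF admissible_q iI l] i l lB
    by (simp add: moment_def)
  moreover have "mean q i = ?ai * ?b1"
    using split[of "\<lambda>y. y i" "\<lambda>_. 1"] admissible_coord[OF admissible_q iI] i by (simp add: mean_def)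
  moreover have "mean q l = ?a1 * ?bl"
    using split[of "\<lambda>_. 1" "\<lambda>z. z l"] admissible_coord[OF admissible_q l] l lB by (simp add: mean_def)
  ultimately have "cov q i l = ?ai * ?bl * (1 - ?a1 * ?b1)"
    unfolding cov_def by (simp add: algebra_simps)
  also have "\<dots> = 0" using one by simp
  finally show ?thesis .
qed

text \<open>A shear acting inside one block only modifies the factor of that block.\<close>

lemma perturb_q_factorizes:
  assumes k0: "k0 \<in> {0..K}" and j: "j \<in> blk G k0"
  shows "\<exists>f'. (\<forall>k\<in>{0..K}. f' k \<in> borel_measurable (PM (blk G k)) \<and> (\<forall>y\<in>space (PM (blk G k)). 0 \<le> f' k y))
    \<and> (\<forall>x\<in>space M. perturb q (blk G k0) j a c s x = (\<Prod>k\<in>{0..K}. f' k (restrict x (blk G k))))"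
proof -
  define U where "U = blk G k0"
  define \<alpha> where "\<alpha> = 1 + s * c j"
  define Ti where "Ti = shear_inv U j \<alpha> (s * a) (\<lambda>l. s * c l)"
  have U: "U \<subseteq> I" using blk_subset_idx[OF k0] by (simp add: U_def)
  have jU: "j \<in> U" using j by (simp add: U_def)
  have J: "finite I" "j \<in> I" "U \<subseteq> I" using U jU by auto
  obtain f where fm: "\<And>k. k\<in>{0..K} \<Longrightarrow> f k \<in> borel_measurable (PM (blk G k))"
    and fn: "\<And>k y. k\<in>{0..K} \<Longrightarrow> y\<in>space (PM (blk G k)) \<Longrightarrow> 0 \<le> f k y"
    and fq: "\<And>x. x\<in>space M \<Longrightarrow> q x = (\<Prod>k\<in>{0..K}. f k (restrict x (blk G k)))"
    using q_FF unfolding FF_family_def by blast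
  define f' where "f' = (\<lambda>k y. if k = k0 then f k0 (Ti y) / \<bar>\<alpha>\<bar> else f k y)"
  have TiM: "Ti \<in> measurable (PM U) (PM U)" unfolding Ti_def by (rule measurable_shear_inv[OF jU order_refl])
  have f'm: "f' k \<in> borel_measurable (PM (blk G k))" if k: "k \<in> {0..K}" for k
  proof (cases "k = k0")
    case True
    have "(\<lambda>y. f k0 (Ti y)) \<in> borel_measurable (PM U)"
      using measurable_comp[OF TiM fm[OF k0, folded U_def]] by (simp add: comp_def)
    then show ?thesis using True by (simp add: f'_def U_def)
  qed (use fm[OF k] in \<open>simp add: f'_def\<close>)
  have f'n: "0 \<le> f' k y" if k: "k \<in> {0..K}" and y: "y \<in> space (PM (blk G k))" for k y
  proof (cases "k = k0")
    case True
    have "Ti y \<in> space (PM U)" using measurable_space[OF TiM] y True by (simp add: U_def)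
    then show ?thesis using True fn[OF k0] by (simp add: f'_def U_def)
  qed (use fn[OF k y] in \<open>simp add: f'_def\<close>)
  have f'q: "perturb q U j a c s x = (\<Prod>k\<in>{0..K}. f' k (restrict x (blk G k)))" if x: "x \<in> space M" for x
  proof -
    have TiS: "Ti x \<in> space M" unfolding Ti_def using measurable_space[OF measurable_shear_inv[OF J(2,3)] x] .
    have r0: "restrict (Ti x) U = Ti (restrict x U)" unfolding Ti_def shear_inv_def by (rule restrict_shear_in[OF jU])
    have r1: "restrict (Ti x) (blk G k) = restrict x (blk G k)" if "k \<in> {0..K}-{k0}" for k
    proof -
      have "j \<notin> blk G k" using that j blk_disjoint[of k k0 G] by auto
      then show ?thesis unfolding Ti_def shear_inv_def by (rule restrict_shear_out)
    qed
    have "perturb q U j a c s x = (\<Prod>k\<in>{0..K}. f k (restrict (Ti x) (blk G k))) / \<bar>\<alpha>\<bar>"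
      using fq[OF TiS] by (simp add: shear_pushforward_def Ti_def \<alpha>_def)
    also have "\<dots> = f k0 (restrict (Ti x) U) / \<bar>\<alpha>\<bar> * (\<Prod>k\<in>{0..K}-{k0}. f k (restrict (Ti x) (blk G k)))"
      using k0 by (simp add: prod.remove U_def)
    also have "\<dots> = f' k0 (restrict x (blk G k0)) * (\<Prod>k\<in>{0..K}-{k0}. f' k (restrict x (blk G k)))"
      using r0 r1 by (simp add: f'_def U_def)
    also have "\<dots> = (\<Prod>k\<in>{0..K}. f' k (restrict x (blk G k)))" using k0 by (simp add: prod.remove)
    finally show ?thesis .
  qed
  show ?thesis
    by (rule exI[of _ f']) (use f'm f'n f'q in \<open>simp add: U_def\<close>)
qed

lemma perturb_q_FF:
  assumes k0: "k0 \<in> {0..K}" and j: "j \<in> blk G k0" and c: "\<And>l. l \<notin> blk G k0 \<Longrightarrow> c l = 0"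
    and s: "1 + s * c j \<noteq> 0"
  shows "perturb q (blk G k0) j a c s \<in> FF_family K G p"
proof -
  have U: "blk G k0 \<subseteq> I" by (rule blk_subset_idx[OF k0])
  have J: "finite I" "j \<in> I" "blk G k0 \<subseteq> I" using U j by auto
  have "is_density M (perturb q (blk G k0) j a c s)"
    using q_density s by (intro is_density_shear_pushforward J)
  moreover have "integrable M (\<lambda>x. perturb q (blk G k0) j a c s x * ln (perturb q (blk G k0) j a c s x))"
    using q_density s q_ln_q by (intro entropy_shear_pushforward(1) J)
  moreover have "integrable M (\<lambda>x. perturb q (blk G k0) j a c s x * ln (p x))"
    by (rule Vobj_perturb(1)[where a=a and s=s and c=c, OF admissible_q q_ln_q U j c s])
  ultimately show ?thesis
    unfolding FF_family_def mem_Collect_eq using perturb_q_factorizes[OF k0 j] by (intro conjI)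
qed

context
  assumes q_opt: "\<And>q'. q' \<in> FF_family K G p \<Longrightarrow> Vobj M q' p \<le> Vobj M q p"
begin

lemma stein_identity_q:
  assumes k0: "k0 \<in> {0..K}" and j: "j \<in> blk G k0" and c: "\<And>l. l \<notin> blk G k0 \<Longrightarrow> c l = 0"
  shows "expect q (\<lambda>x. (a + (\<Sum>l\<in>I. c l * x l)) * dlog j x) = - c j"
proof (rule stein_identity[OF admissible_q q_ln_q blk_subset_idx[OF k0] j c])
  fix s assume s: "1 + s * c j \<noteq> 0"
  show "Vobj M (perturb q (blk G k0) j a c s) p \<le> Vobj M q p"
    by (rule q_opt[OF perturb_q_FF[where c=c and s=s and a=a, OF k0 j c s]])
qed

lemma prec_cov_q: assumes k0: "k0 \<in> {0..K}" and i: "i \<in> blk G k0" and j: "j \<in> blk G k0"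
  shows "(\<Sum>l\<in>I. prec j l * cov q i l) = (if i = j then 1 else 0)"
proof (rule prec_cov_of_stein[OF admissible_q])
  show iI: "i \<in> I" and jI: "j \<in> I" using i j blk_subset_idx[OF k0] by auto
  have c0: "\<And>l. l \<notin> blk G k0 \<Longrightarrow> (if l = i then 1 else (0::real)) = 0" using i by auto
  show "expect q (\<lambda>x. (1 + (\<Sum>l\<in>I. 0 * x l)) * dlog j x) = 0"
    using stein_identity_q[OF k0 j, of "\<lambda>_. 0" 1] by simp
  show "expect q (\<lambda>x. (0 + (\<Sum>l\<in>I. (if l = i then 1 else 0) * x l)) * dlog j x) = - (if i = j then 1 else 0)"
    using stein_identity_q[OF k0 j c0, where a=0] by simp
qed

lemma cov_q: assumes i: "i \<in> I" and l: "l \<in> I"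
  shows "cov q i l = (if i = l then 1 / prec_diag i else 0)"
proof -
  obtain k where k: "k \<in> {0..K}" and ik: "i \<in> blk G k" using mem_idx_blk[OF i] by blast
  show ?thesis
  proof (cases "l \<in> blk G k")
    case False
    then have "i \<noteq> l" using ik by auto
    then show ?thesis using cov_q_off_block[OF k ik l False] by simp
  next
    case True
    have "(\<Sum>m\<in>I. prec l m * cov q i m) = (\<Sum>m\<in>I. (if m = l then prec_diag l * cov q i l else 0))"
    proof (rule sum.cong[OF refl])
      fix m assume m: "m \<in> I"
      show "prec l m * cov q i m = (if m = l then prec_diag l * cov q i l else 0)"
      proof (cases "m = l")
        case True then show ?thesis by (simp add: prec_diag_eq)
      next
        case ml: False
        show ?thesis
        proof (cases "m \<in> blk G k")
          case True then show ?thesis using prec_off_diag_blk[of l k m] \<open>l \<in> blk G k\<close> ml by auto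
        next
          case False then show ?thesis using cov_q_off_block[OF k ik m False] ml by simp
        qed
      qed
    qed
    also have "\<dots> = prec_diag l * cov q i l" using l by (simp add: sum.delta)
    finally have "prec_diag l * cov q i l = (if i = l then 1 else 0)"
      using prec_cov_q[OF k ik True] by simp
    then show ?thesis using prec_diag_pos[OF l] by (auto simp: field_simps)
  qed
qed

lemma var_q: "var_dens M q (lin I v) = (\<Sum>i\<in>I. (v i)^2 / prec_diag i)"
proof -
  have "var_dens M q (lin I v) = (\<Sum>i\<in>I. \<Sum>l\<in>I. v i * v l * cov q i l)" by (rule var_dens_lin[OF admissible_q])
  also have "\<dots> = (\<Sum>i\<in>I. \<Sum>l\<in>I. (if l = i then (v i)^2 / prec_diag i else 0))"
    by (intro sum.cong refl) (auto simp: cov_q power2_eq_square)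
  also have "\<dots> = (\<Sum>i\<in>I. (v i)^2 / prec_diag i)" by (simp add: sum.delta)
  finally show ?thesis .
qed

end

end

section \<open>The test direction\<close>

definition shrink :: "nat \<Rightarrow> real" where
  "shrink k = (\<Sum>g<G k. (lev_weight k g)^2 / (Dsq_sum * (T k + lev_weight k g)))"

lemma sum_shrink: "k \<in> {1..K} \<Longrightarrow> (\<Sum>g<G k. (lev_weight k g)^2 / (T k + lev_weight k g)) = Dsq_sum * shrink k"
  using Dsq_sum_pos by (simp add: shrink_def sum_distrib_left)

lemma lev_weight_pos_ex: assumes k: "k \<in> {1..K}" shows "\<exists>g\<in>{..<G k}. lev_weight k g > 0"
proof (rule ccontr)
  assume "\<not> ?thesis"
  then have "\<forall>g\<in>{..<G k}. lev_weight k g = 0" using lev_weight_nonneg[of k] by (auto simp: not_less order.antisym)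
  then have "(\<Sum>g<G k. lev_weight k g) = 0" by simp
  then show False using sum_lev_weight[OF k] Dsq_sum_pos by simp
qed

lemma shrink_pos_less_one: assumes k: "k \<in> {1..K}"
  shows "shrink k > 0" "shrink k < 1"
proof -
  have Tk: "T k > 0" using T_pos[OF k] .
  have Sp: "Dsq_sum > 0" by (rule Dsq_sum_pos)
  note ex = lev_weight_pos_ex[OF k]
  have pp: "\<And>g. 0 < Dsq_sum * (T k + lev_weight k g)"
    using Sp Tk lev_weight_nonneg[of k] by (simp add: add_pos_nonneg)
  have tnn: "\<And>g. 0 \<le> (lev_weight k g)^2 / (Dsq_sum * (T k + lev_weight k g))"
    using pp by (intro divide_nonneg_pos) auto
  obtain g0 where g0: "g0 \<in> {..<G k}" and sg0: "lev_weight k g0 > 0" using ex by blast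
  show "shrink k > 0" unfolding shrink_def
    by (rule sum_pos2[OF _ g0]) (use sg0 pp tnn in \<open>auto intro!: divide_pos_pos\<close>)
  have le: "(lev_weight k g)^2 / (Dsq_sum * (T k + lev_weight k g)) \<le> lev_weight k g / Dsq_sum" for g
  proof -
    have s0: "lev_weight k g \<ge> 0" by (rule lev_weight_nonneg)
    have tp: "T k + lev_weight k g > 0" using s0 Tk by simp
    have "(lev_weight k g)^2 \<le> lev_weight k g * (T k + lev_weight k g)" using s0 Tk by (simp add: power2_eq_square mult_left_mono)
    then have "(lev_weight k g)^2 / (T k + lev_weight k g) \<le> lev_weight k g" using tp by (simp add: pos_divide_le_eq)
    then have "(lev_weight k g)^2 / (T k + lev_weight k g) / Dsq_sum \<le> lev_weight k g / Dsq_sum" by (rule divide_right_mono) (use Sp in simp)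
    then show ?thesis by (simp add: divide_divide_eq_left mult.commute)
  qed
  have lt: "(lev_weight k g)^2 / (Dsq_sum * (T k + lev_weight k g)) < lev_weight k g / Dsq_sum" if "lev_weight k g > 0" for g
  proof -
    have tp: "T k + lev_weight k g > 0" using that Tk by simp
    have "(lev_weight k g)^2 < lev_weight k g * (T k + lev_weight k g)" using that Tk by (simp add: power2_eq_square)
    then have "(lev_weight k g)^2 / (T k + lev_weight k g) < lev_weight k g" using tp by (simp add: pos_divide_less_eq)
    then have "(lev_weight k g)^2 / (T k + lev_weight k g) / Dsq_sum < lev_weight k g / Dsq_sum" by (rule divide_strict_right_mono) (use Sp in simp)
    then show ?thesis by (simp add: divide_divide_eq_left mult.commute)
  qed
  have "shrink k < (\<Sum>g<G k. lev_weight k g / Dsq_sum)" unfolding shrink_def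
    by (rule sum_strict_mono_ex1) (use le lt ex in auto)
  also have "\<dots> = 1" using sum_lev_weight[OF k] Sp by (simp add: sum_divide_distrib[symmetric])
  finally show "shrink k < 1" .
qed

lemma shrink_lower_bound: assumes k: "k \<in> {1..K}"
  shows "Dsq_sum / (real (G k) * T k + Dsq_sum) \<le> shrink k"
proof -
  have Tk: "T k > 0" using T_pos[OF k] .
  have Sp: "Dsq_sum > 0" by (rule Dsq_sum_pos)
  have "(\<Sum>g<G k. (lev_weight k g / sqrt (T k + lev_weight k g)) * sqrt (T k + lev_weight k g))^2
     \<le> (\<Sum>g<G k. (lev_weight k g / sqrt (T k + lev_weight k g))^2) * (\<Sum>g<G k. (sqrt (T k + lev_weight k g))^2)"
    by (rule Cauchy_Schwarz_ineq_sum)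
  moreover have "(\<Sum>g<G k. (lev_weight k g / sqrt (T k + lev_weight k g)) * sqrt (T k + lev_weight k g)) = Dsq_sum"
  proof -
    have "(lev_weight k g / sqrt (T k + lev_weight k g)) * sqrt (T k + lev_weight k g) = lev_weight k g" for g
      using Tk lev_weight_nonneg[of k g] by simp
    then show ?thesis using sum_lev_weight[OF k] by simp
  qed
  moreover have "(\<Sum>g<G k. (lev_weight k g / sqrt (T k + lev_weight k g))^2) = Dsq_sum * shrink k"
  proof -
    have "(lev_weight k g / sqrt (T k + lev_weight k g))^2 = (lev_weight k g)^2 / (T k + lev_weight k g)" for g
      using Tk lev_weight_nonneg[of k g] by (simp add: power_divide)
    then show ?thesis using sum_shrink[OF k] by simp
  qed
  moreover have "(\<Sum>g<G k. (sqrt (T k + lev_weight k g))^2) = real (G k) * T k + Dsq_sum"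
  proof -
    have "(sqrt (T k + lev_weight k g))^2 = T k + lev_weight k g" for g
      using Tk lev_weight_nonneg[of k g] by simp
    then show ?thesis using sum_lev_weight[OF k] by (simp add: sum.distrib)
  qed
  ultimately have "Dsq_sum * Dsq_sum \<le> Dsq_sum * (shrink k * (real (G k) * T k + Dsq_sum))"
    by (simp add: power2_eq_square mult.assoc)
  then have h: "Dsq_sum \<le> shrink k * (real (G k) * T k + Dsq_sum)" using Sp by (simp add: mult_le_cancel_left_pos)
  have X: "real (G k) * T k + Dsq_sum > 0" using Tk Sp by (simp add: add_nonneg_pos)
  show ?thesis
    using h X by (simp add: pos_divide_le_eq)
qed

definition rho :: "nat \<Rightarrow> real" where "rho k = sqrt (shrink k)"

definition test_vec :: "nat \<Rightarrow> nat \<times> nat \<Rightarrow> real" where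
  "test_vec k l = (if l = (0,0) then 1 else if fst l = k then - lev_weight k (snd l) / (Dsq_sum * rho k) else 0)"

definition dual_vec :: "nat \<Rightarrow> nat \<times> nat \<Rightarrow> real" where
  "dual_vec k l = (if l = (0,0) then 1 / Dsq_sum else if fst l = k then - lev_weight k (snd l) / (Dsq_sum * rho k * (T k + lev_weight k (snd l))) else 0)"

lemma rho_bounds: assumes k: "k \<in> {1..K}"
  shows "rho k > 0" "rho k < 1" "(rho k)^2 = shrink k"
    "rho k \<ge> sqrt (Dsq_sum / (real (G k) * T k + Dsq_sum))"
proof -
  have a: "shrink k > 0" "shrink k < 1" "shrink k \<ge> Dsq_sum / (real (G k) * T k + Dsq_sum)"
    using shrink_pos_less_one[OF k] shrink_lower_bound[OF k] by auto
  show "rho k > 0" using a by (simp add: rho_def)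
  show "rho k < 1" using a real_sqrt_less_iff[of "shrink k" 1] by (simp add: rho_def)
  show "(rho k)^2 = shrink k" using a by (simp add: rho_def)
  show "rho k \<ge> sqrt (Dsq_sum / (real (G k) * T k + Dsq_sum))" using a by (simp add: rho_def real_sqrt_le_mono)
qed

lemma var_q_test_vec: assumes k: "k \<in> {1..K}" shows "(\<Sum>i\<in>I. (test_vec k i)^2 / prec_diag i) = 2 / Dsq_sum"
proof -
  have Sp: "Dsq_sum > 0" by (rule Dsq_sum_pos)
  have rp: "rho k > 0" and r2: "(rho k)^2 = shrink k" using rho_bounds[OF k] by auto
  have k0: "k \<noteq> 0" using k by simp
  have "(\<Sum>i\<in>I. (test_vec k i)^2 / prec_diag i) = (test_vec k (0,0))^2 / prec_diag (0,0) + (\<Sum>g<G k. (test_vec k (k,g))^2 / prec_diag (k,g))"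
    by (rule sum_idx_single_block[OF k]) (simp add: test_vec_def)
  also have "(\<Sum>g<G k. (test_vec k (k,g))^2 / prec_diag (k,g)) = (\<Sum>g<G k. 1 / (Dsq_sum^2 * (rho k)^2) * ((lev_weight k g)^2 / (T k + lev_weight k g)))"
    by (intro sum.cong refl) (simp add: test_vec_def prec_diag_level[OF k] k0 power_divide power_mult_distrib add.commute)
  also have "\<dots> = 1 / (Dsq_sum^2 * (rho k)^2) * (\<Sum>g<G k. (lev_weight k g)^2 / (T k + lev_weight k g))"
    by (rule sum_distrib_left[symmetric])
  also have "\<dots> = 1 / (Dsq_sum^2 * (rho k)^2) * (Dsq_sum * shrink k)"
    by (simp only: sum_shrink[OF k])
  also have "\<dots> = 1 / Dsq_sum" using Sp rp r2 shrink_pos_less_one(1)[OF k] by (simp add: power2_eq_square field_simps)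
  finally show ?thesis using Sp by (simp add: test_vec_def prec_diag_intercept power2_eq_square)
qed

lemma inner_test_dual: assumes k: "k \<in> {1..K}" shows "(\<Sum>i\<in>I. test_vec k i * dual_vec k i) = 2 / Dsq_sum"
proof -
  have Sp: "Dsq_sum > 0" by (rule Dsq_sum_pos)
  have rp: "rho k > 0" and r2: "(rho k)^2 = shrink k" using rho_bounds[OF k] by auto
  have k0: "k \<noteq> 0" using k by simp
  have "(\<Sum>i\<in>I. test_vec k i * dual_vec k i) = test_vec k (0,0) * dual_vec k (0,0) + (\<Sum>g<G k. test_vec k (k,g) * dual_vec k (k,g))"
    by (rule sum_idx_single_block[OF k]) (simp add: test_vec_def)
  also have "(\<Sum>g<G k. test_vec k (k,g) * dual_vec k (k,g)) = (\<Sum>g<G k. 1 / (Dsq_sum^2 * (rho k)^2) * ((lev_weight k g)^2 / (T k + lev_weight k g)))"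
    by (intro sum.cong refl) (simp add: test_vec_def dual_vec_def k0 power2_eq_square)
  also have "\<dots> = 1 / (Dsq_sum^2 * (rho k)^2) * (\<Sum>g<G k. (lev_weight k g)^2 / (T k + lev_weight k g))"
    by (rule sum_distrib_left[symmetric])
  also have "\<dots> = 1 / (Dsq_sum^2 * (rho k)^2) * (Dsq_sum * shrink k)"
    by (simp only: sum_shrink[OF k])
  also have "\<dots> = 1 / Dsq_sum" using Sp rp r2 shrink_pos_less_one(1)[OF k] by (simp add: power2_eq_square field_simps)
  finally show ?thesis using Sp by (simp add: test_vec_def dual_vec_def)
qed

lemma eta_dual_vec: assumes k: "k \<in> {1..K}" shows "eta K lev t (dual_vec k) = 1 / Dsq_sum + dual_vec k (k, lev t k)"
proof -
  have "(\<Sum>k'=1..K. dual_vec k (k', lev t k')) = (\<Sum>k'=1..K. (if k' = k then dual_vec k (k, lev t k) else 0))"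
    by (intro sum.cong refl) (auto simp: dual_vec_def)
  also have "\<dots> = dual_vec k (k, lev t k)" using k by (simp add: sum.delta)
  finally show ?thesis by (simp add: eta_def dual_vec_def)
qed

lemma prec_quad_dual_vec: assumes k: "k \<in> {1..K}"
  shows "(\<Sum>i\<in>I. \<Sum>j\<in>I. prec i j * dual_vec k j * dual_vec k i) = 2 * (1 - rho k) / Dsq_sum"
proof -
  have Sp: "Dsq_sum > 0" by (rule Dsq_sum_pos)
  have rp: "rho k > 0" and r2: "(rho k)^2 = shrink k" using rho_bounds[OF k] by auto
  have Tk: "T k > 0" using T_pos[OF k] .
  have k0: "k \<noteq> 0" using k by simp
  define wk where "wk = (\<lambda>g. - lev_weight k g / (Dsq_sum * rho k * (T k + lev_weight k g)))"
  have wkk: "dual_vec k (k,g) = wk g" for g using k0 by (simp add: dual_vec_def wk_def)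
  have A: "(\<Sum>t<n. (D t)^2 * (eta K lev t (dual_vec k))^2) = (\<Sum>g<G k. lev_weight k g * (1 / Dsq_sum + wk g)^2)"
    unfolding eta_dual_vec[OF k] wkk by (rule sum_by_level[OF k])
  have B: "(\<Sum>i\<in>I. prior_prec i * (dual_vec k i)^2) = (\<Sum>g<G k. T k * (wk g)^2)"
  proof -
    have "(\<Sum>i\<in>I. prior_prec i * (dual_vec k i)^2) = prior_prec (0,0) * (dual_vec k (0,0))^2 + (\<Sum>g<G k. prior_prec (k,g) * (dual_vec k (k,g))^2)"
      by (rule sum_idx_single_block[OF k]) (simp add: dual_vec_def)
    then show ?thesis using k0 by (simp add: prior_prec_def wkk)
  qed
  have trm: "lev_weight k g * (1 / Dsq_sum + wk g)^2 + T k * (wk g)^2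
      = lev_weight k g / Dsq_sum^2 - 2 / (Dsq_sum^2 * rho k) * ((lev_weight k g)^2 / (T k + lev_weight k g))
        + 1 / (Dsq_sum^2 * (rho k)^2) * ((lev_weight k g)^2 / (T k + lev_weight k g))" for g
  proof -
    have tp: "T k + lev_weight k g > 0" using Tk lev_weight_nonneg[of k g] by simp
    have "T k = (T k + lev_weight k g) - lev_weight k g" by simp
    then show ?thesis unfolding wk_def using quad_term_identity[OF tp Sp rp, of "lev_weight k g"] by simp
  qed
  have "(\<Sum>i\<in>I. \<Sum>j\<in>I. prec i j * dual_vec k j * dual_vec k i)
      = (\<Sum>g<G k. lev_weight k g * (1 / Dsq_sum + wk g)^2 + T k * (wk g)^2)"
    unfolding prec_quad_eq A B by (simp add: sum.distrib)
  also have "\<dots> = (\<Sum>g<G k. lev_weight k g) / Dsq_sum^2 - 2 / (Dsq_sum^2 * rho k) * (\<Sum>g<G k. (lev_weight k g)^2 / (T k + lev_weight k g))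
        + 1 / (Dsq_sum^2 * (rho k)^2) * (\<Sum>g<G k. (lev_weight k g)^2 / (T k + lev_weight k g))"
    unfolding trm by (simp add: sum.distrib sum_subtractf sum_distrib_left sum_divide_distrib)
  also have "\<dots> = Dsq_sum / Dsq_sum^2 - 2 / (Dsq_sum^2 * rho k) * (Dsq_sum * (rho k)^2) + 1 / (Dsq_sum^2 * (rho k)^2) * (Dsq_sum * (rho k)^2)"
    by (simp only: sum_lev_weight[OF k] sum_shrink[OF k] r2)
  also have "\<dots> = 2 * (1 - rho k) / Dsq_sum" using Sp rp by (simp add: power2_eq_square field_simps)
  finally show ?thesis .
qed

context
  fixes q :: "(nat \<times> nat \<Rightarrow> real) \<Rightarrow> real"
  assumes q_FF: "q \<in> FF_family K G p"
    and q_opt: "\<And>q'. q' \<in> FF_family K G p \<Longrightarrow> Vobj M q' p \<le> Vobj M q p"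
begin

lemma var_ratio_test_vec: assumes k: "k \<in> {1..K}"
  shows "var_dens M q (lin I (test_vec k)) / var_dens M p (lin I (test_vec k)) \<le> 1 - rho k"
proof -
  have Sp: "Dsq_sum > 0" by (rule Dsq_sum_pos)
  have rp: "rho k > 0" and r1: "rho k < 1" using rho_bounds[OF k] by auto
  have vq: "var_dens M q (lin I (test_vec k)) = 2 / Dsq_sum" using var_q[OF q_FF q_opt] var_q_test_vec[OF k] by simp
  have gam: "(\<Sum>i\<in>I. \<Sum>j\<in>I. prec i j * dual_vec k j * dual_vec k i) > 0" unfolding prec_quad_dual_vec[OF k] using Sp r1 by simp
  have "(\<Sum>i\<in>I. test_vec k i * dual_vec k i)^2 / (\<Sum>i\<in>I. \<Sum>j\<in>I. prec i j * dual_vec k j * dual_vec k i) \<le> var_dens M p (lin I (test_vec k))"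
    by (rule var_p_lower_bound[OF gam])
  also have "(\<Sum>i\<in>I. test_vec k i * dual_vec k i)^2 / (\<Sum>i\<in>I. \<Sum>j\<in>I. prec i j * dual_vec k j * dual_vec k i) = 2 / (Dsq_sum * (1 - rho k))"
    unfolding inner_test_dual[OF k] prec_quad_dual_vec[OF k] using Sp r1 by (simp add: power2_eq_square field_simps)
  finally have vp: "2 / (Dsq_sum * (1 - rho k)) \<le> var_dens M p (lin I (test_vec k))" .
  have pos: "2 / (Dsq_sum * (1 - rho k)) > 0" using Sp r1 by simp
  have "var_dens M q (lin I (test_vec k)) / var_dens M p (lin I (test_vec k)) \<le> (2 / Dsq_sum) / (2 / (Dsq_sum * (1 - rho k)))"
  proof -
    have vpp: "var_dens M p (lin I (test_vec k)) > 0" using pos vp by linarith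
    have pr: "0 < var_dens M p (lin I (test_vec k)) * (2 / (Dsq_sum * (1 - rho k)))" using vpp pos by simp
    have c0: "0 \<le> 2 / Dsq_sum" using Sp by simp
    show ?thesis unfolding vq by (rule divide_left_mono[OF vp c0 pr])
  qed
  also have "\<dots> = 1 - rho k" using Sp r1 by (simp add: field_simps)
  finally show ?thesis .
qed

lemma UQF_bound:
  "UQF K G q p \<le> 1 - Max ((\<lambda>k. sqrt ((\<Sum>i<n. (D i)^2) / (real (G k) * T k + (\<Sum>i<n. (D i)^2)))) ` {1..K})"
proof -
  let ?f = "\<lambda>k. sqrt ((\<Sum>i<n. (D i)^2) / (real (G k) * T k + (\<Sum>i<n. (D i)^2)))"
  have ne: "{1..K} \<noteq> {}" using K_pos by simp
  have "Max (?f ` {1..K}) \<in> ?f ` {1..K}" by (rule Max_in) (use ne in auto)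
  then obtain k where k: "k \<in> {1..K}" and mk: "Max (?f ` {1..K}) = ?f k" by blast
  let ?A = "{v. \<exists>j\<in>I. v j \<noteq> 0}"
  let ?r = "\<lambda>v. var_dens M q (lin I v) / var_dens M p (lin I v)"
  have bdd: "bdd_below (?r ` ?A)"
  proof (rule bdd_belowI[of _ 0])
    fix x assume "x \<in> ?r ` ?A"
    then obtain v where "x = ?r v" by auto
    then show "0 \<le> x"
      using var_dens_lin_nonneg[OF admissible_q[OF q_FF], of v] var_dens_lin_nonneg[OF admissible_p, of v] by simp
  qed
  have vA: "test_vec k \<in> ?A" using zero_mem_idx[of K G] by (auto simp: test_vec_def intro!: bexI[of _ "(0,0)"])
  have "UQF K G q p = (INF v\<in>?A. ?r v)" by (simp add: UQF_def)
  also have "\<dots> \<le> ?r (test_vec k)" by (rule cINF_lower[OF bdd vA])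
  also have "\<dots> \<le> 1 - rho k" by (rule var_ratio_test_vec[OF k])
  also have "\<dots> \<le> 1 - ?f k" using rho_bounds(4)[OF k] by (simp add: Dsq_sum_def)
  finally show ?thesis using mk by simp
qed

end

end

theorem theorem2:
  fixes n K :: nat and G :: "nat \<Rightarrow> nat" and lev :: "nat \<Rightarrow> nat \<Rightarrow> nat"
    and D T nu :: "nat \<Rightarrow> real" and q :: "(nat \<times> nat \<Rightarrow> real) \<Rightarrow> real"
  assumes "n \<ge> 1" and "K \<ge> 1"
    and "\<And>k. k \<in> {1..K} \<Longrightarrow> G k \<ge> 1"
    and "\<And>i k. i < n \<Longrightarrow> k \<in> {1..K} \<Longrightarrow> lev i k < G k"
    and "\<And>i. i < n \<Longrightarrow> D i > 0"
    and "\<And>k. k \<in> {1..K} \<Longrightarrow> T k > 0"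
    and "q \<in> FF_family K G (target_dens n K G lev D T nu)"
    and "\<And>q'. q' \<in> FF_family K G (target_dens n K G lev D T nu) \<Longrightarrow>
           Vobj (PM (idx K G)) q' (target_dens n K G lev D T nu)
           \<le> Vobj (PM (idx K G)) q (target_dens n K G lev D T nu)"
  shows "UQF K G q (target_dens n K G lev D T nu)
         \<le> 1 - Max ((\<lambda>k. sqrt ((\<Sum>i<n. (D i)^2) / (real (G k) * T k + (\<Sum>i<n. (D i)^2)))) ` {1..K})"
proof -
  interpret random_intercept n K G lev D T nu
    by (rule random_intercept.intro) (use assms in auto)
  show ?thesis by (rule UQF_bound[OF assms(7) assms(8)])
qed

end
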